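(* Let $\alpha>0$, $A>0$, $k\ge2$ and $a\ge1$. Then \[ \lambda_k(I_{A^{1/2}a},\alpha)+\lambda_1(I_{A^{1/2}/a},\alpha)\ge\lambda_1(Q_{(A/k)^{1/2}},\alpha)=\lambda_k(S_k,\alpha). \]
   Context: For a bounded open set $\Omega\subset\mathbb{R}^d$ ($d=1,2$) with Lipschitz boundary (possibly disconnected) and $\alpha>0$, $\lambda_1(\Omega,\alpha)\le\lambda_2(\Omega,\alpha)\le\cdots$ denote the eigenvalues, counted with multiplicity, of the Robin Laplacian $-\Delta u=\lambda u$, $\partial_\nu u+\alpha u=0$ on $\partial\Omega$ (defined via the form $\int_\Omega\nabla u\cdot\overline{\nabla v}+\alpha\int_{\partial\Omega}u\overline v$ on $H^1(\Omega)$). $I_b$ is an interval of length $b$; $Q_s$ is a square of side length $s$; $S_k$ is the disjoint union of $k$ equal squares of total area $A$. The left-hand side is the eigenvalue of the rectangle with sides $A^{1/2}a$, $A^{1/2}/a$ associated with its $(k,1)$ mode. *)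

theory Defs
  imports "HOL-Analysis.Analysis"
begin

definition lincomb :: "(nat \<Rightarrow> 'a \<Rightarrow> real) \<Rightarrow> (nat \<Rightarrow> real) \<Rightarrow> nat \<Rightarrow> 'a \<Rightarrow> real" where
  "lincomb f c k = (\<lambda>x. \<Sum>i<k. c i * f i x)"

text \<open>k-th min-max value: infimum over k-dimensional subspaces (spanned by k test functions,
  linearly independent in the L2 sense) of the maximum of the Rayleigh quotient Q/M.\<close>
definition minmax_level :: "(('a \<Rightarrow> real) \<Rightarrow> bool) \<Rightarrow> (('a \<Rightarrow> real) \<Rightarrow> real)
    \<Rightarrow> (('a \<Rightarrow> real) \<Rightarrow> real) \<Rightarrow> nat \<Rightarrow> real" where
  "minmax_level T Q M k =
     Inf { Sup { Q (lincomb f c k) / M (lincomb f c k) | c. \<exists>i<k. c i \<noteq> 0 }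
         | f. (\<forall>i<k. T (f i)) \<and> (\<forall>c. (\<exists>i<k. c i \<noteq> 0) \<longrightarrow> M (lincomb f c k) > 0) }"

definition robin_form_int :: "real \<Rightarrow> real \<Rightarrow> (real \<Rightarrow> real) \<Rightarrow> real" where
  "robin_form_int \<alpha> b u = integral {0..b} (\<lambda>x. (deriv u x)\<^sup>2) + \<alpha> * ((u 0)\<^sup>2 + (u b)\<^sup>2)"

definition mass_int :: "real \<Rightarrow> (real \<Rightarrow> real) \<Rightarrow> real" where
  "mass_int b u = integral {0..b} (\<lambda>x. (u x)\<^sup>2)"

definition robin_eig_interval :: "real \<Rightarrow> real \<Rightarrow> nat \<Rightarrow> real" where
  "robin_eig_interval \<alpha> b k =
     minmax_level (\<lambda>u. u C1_differentiable_on UNIV) (robin_form_int \<alpha> b) (mass_int b) k"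

definition C1_plane :: "(real \<times> real \<Rightarrow> real) \<Rightarrow> bool" where
  "C1_plane u \<longleftrightarrow> (\<exists>D :: real \<times> real \<Rightarrow> (real \<times> real) \<Rightarrow>\<^sub>L real.
      (\<forall>x. (u has_derivative blinfun_apply (D x)) (at x)) \<and> continuous_on UNIV D)"

definition grad_sq :: "(real \<times> real \<Rightarrow> real) \<Rightarrow> real \<times> real \<Rightarrow> real" where
  "grad_sq u x = (frechet_derivative u (at x) (1,0))\<^sup>2 + (frechet_derivative u (at x) (0,1))\<^sup>2"

definition robin_form_sq :: "real \<Rightarrow> real \<Rightarrow> real \<Rightarrow> (real \<times> real \<Rightarrow> real) \<Rightarrow> real" where
  "robin_form_sq \<alpha> p s u =
     integral (cbox (p,0) (p+s,s)) (grad_sq u)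
     + \<alpha> * (integral {0..s} (\<lambda>t. (u (p+t,0))\<^sup>2) + integral {0..s} (\<lambda>t. (u (p+t,s))\<^sup>2)
           + integral {0..s} (\<lambda>t. (u (p,t))\<^sup>2) + integral {0..s} (\<lambda>t. (u (p+s,t))\<^sup>2))"

definition mass_sq :: "real \<Rightarrow> real \<Rightarrow> (real \<times> real \<Rightarrow> real) \<Rightarrow> real" where
  "mass_sq p s u = integral (cbox (p,0) (p+s,s)) (\<lambda>x. (u x)\<^sup>2)"

text \<open>lambda_j of the disjoint union of m squares of side s, the i-th being
  (2 i s, 2 i s + s) x (0,s) (pairwise disjoint closures).  For m = 1 this is the square Q_s.\<close>
definition robin_eig_squares :: "real \<Rightarrow> nat \<Rightarrow> real \<Rightarrow> nat \<Rightarrow> real" where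
  "robin_eig_squares \<alpha> m s j =
     minmax_level C1_plane (\<lambda>u. \<Sum>i<m. robin_form_sq \<alpha> (2 * real i * s) s u)
                            (\<lambda>u. \<Sum>i<m. mass_sq (2 * real i * s) s u) j"

end

(* The first Robin eigenvalue of an interval of length l is mu(l) = (2 theta / l)^2, where
   0 < theta < pi/2 and 2 theta tan theta = alpha l.  On an interval of length b, every n-dimensional
   space of test functions contains a function vanishing at the n - 1 interior nodes of the uniform
   partition; the Robin-Poincare inequality on each of the n cells, obtained from the Riccati
   substitution psi = - omega tan (omega (x - c)), then gives lambda_n(I_b) >= mu(b/n).  Separating
   variables bounds the Rayleigh quotient on a square of side s below by 2 mu(s), and C^1 cut-offs of
   the product mode, each supported near a single square, attain this value; hence
   lambda_1(Q_s) = lambda_k(S_k) = 2 mu(s).  Finally mu = alpha^2 cot^2 theta is a convex function of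
   log l = log (2 theta tan theta / alpha), since the ratio of the two derivatives in theta is
   increasing.  With x = sqrt A a / k and y = sqrt A / a, so that x y = s^2 = A / k, the left-hand side
   is at least mu(x) + mu(y) >= 2 mu(s). *)

theory Submission
  imports Defs
begin

section \<open>Quadratic forms in finitely many coefficients\<close>

definition quad_form :: "(nat \<Rightarrow> nat \<Rightarrow> real) \<Rightarrow> nat \<Rightarrow> (nat \<Rightarrow> real) \<Rightarrow> real" where
  "quad_form q n c = (\<Sum>i<n. \<Sum>j<n. c i * c j * q i j)"

lemma quad_form_cong: "(\<And>i. i < n \<Longrightarrow> c i = c' i) \<Longrightarrow> quad_form q n c = quad_form q n c'"
  unfolding quad_form_def by (intro sum.cong refl) auto

lemma quad_form_add: "quad_form (\<lambda>i j. p i j + q i j) n c = quad_form p n c + quad_form q n c"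
  unfolding quad_form_def by (simp add: algebra_simps sum.distrib)

lemma quad_form_cmult: "quad_form (\<lambda>i j. r * q i j) n c = r * quad_form q n c"
  unfolding quad_form_def by (simp add: algebra_simps sum_distrib_left)

lemma square_sum_eq_quad_form: "(\<Sum>i<n. c i * a i)\<^sup>2 = quad_form (\<lambda>i j. a i * a j) n c"
  unfolding quad_form_def power2_eq_square sum_product by (simp add: algebra_simps)

lemma quad_form_symmetrize: "quad_form q n c = quad_form (\<lambda>i j. (q i j + q j i) / 2) n c"
proof -
  have "(\<Sum>i<n. \<Sum>j<n. c i * c j * q j i) = quad_form q n c"
    unfolding quad_form_def by (subst sum.swap) (simp add: mult.commute mult.left_commute)
  moreover have "quad_form (\<lambda>i j. (q i j + q j i) / 2) n c
      = (quad_form q n c + (\<Sum>i<n. \<Sum>j<n. c i * c j * q j i)) / 2"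
    unfolding quad_form_def by (simp add: sum.distrib sum_divide_distrib ring_distribs add_divide_distrib)
  ultimately show ?thesis by simp
qed

lemma quad_form_le:
  "quad_form q n c \<le> (\<Sum>i<n. \<Sum>j<n. \<bar>q i j\<bar>) * (\<Sum>i<n. (c i)\<^sup>2)"
proof -
  define S where "S = (\<Sum>i<n. (c i)\<^sup>2)"
  have cc: "\<bar>c i * c j\<bar> \<le> S" if "i < n" "j < n" for i j
  proof -
    have "\<bar>c i * c j\<bar> \<le> ((c i)\<^sup>2 + (c j)\<^sup>2) / 2"
      using sum_squares_ge_zero[of "\<bar>c i\<bar> - \<bar>c j\<bar>" 0]
      by (simp add: power2_eq_square algebra_simps abs_mult)
    also have "\<dots> \<le> S"
      using member_le_sum[of i "{..<n}" "\<lambda>i. (c i)\<^sup>2"] member_le_sum[of j "{..<n}" "\<lambda>i. (c i)\<^sup>2"] that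
      unfolding S_def by auto
    finally show ?thesis .
  qed
  then have "c i * c j * q i j \<le> \<bar>q i j\<bar> * S" if "i < n" "j < n" for i j
  proof -
    have "c i * c j * q i j \<le> \<bar>c i * c j\<bar> * \<bar>q i j\<bar>" by (metis abs_ge_self abs_mult)
    also have "\<dots> \<le> S * \<bar>q i j\<bar>" using cc[OF that] by (intro mult_right_mono) auto
    finally show ?thesis by (simp add: mult.commute)
  qed
  then have "quad_form q n c \<le> (\<Sum>i<n. \<Sum>j<n. \<bar>q i j\<bar> * S)"
    unfolding quad_form_def by (intro sum_mono) auto
  then show ?thesis unfolding S_def by (simp add: sum_distrib_right)
qed

lemma quad_form_Suc_complete_square:
  assumes sym: "\<And>i j. q i j = q j i" and d: "q n n \<noteq> 0"
  shows "quad_form q (Suc n) c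
     = quad_form (\<lambda>i j. q i j - q i n * q j n / q n n) n c
       + q n n * (c n + (\<Sum>i<n. c i * q i n) / q n n)\<^sup>2"
proof -
  define b where "b = (\<Sum>i<n. c i * q i n)"
  have "(\<Sum>j<n. c n * c j * q n j) = c n * b" "(\<Sum>i<n. c i * c n * q i n) = c n * b"
    unfolding b_def sum_distrib_left by (auto intro!: sum.cong simp: sym[of n])
  then have "quad_form q (Suc n) c = quad_form q n c + 2 * c n * b + (c n)\<^sup>2 * q n n"
    unfolding quad_form_def by (simp add: sum.distrib power2_eq_square)
  moreover have "quad_form (\<lambda>i j. q i j - q i n * q j n / q n n) n c = quad_form q n c - b\<^sup>2 / q n n"
    unfolding b_def power2_eq_square sum_product quad_form_def sum_divide_distrib
      sum_subtractf[symmetric]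
    by (intro sum.cong refl) (simp add: algebra_simps)
  moreover have "q n n * (c n + b / q n n)\<^sup>2 = (c n)\<^sup>2 * q n n + 2 * c n * b + b\<^sup>2 / q n n"
    using d by (simp add: power2_eq_square field_simps)
  ultimately show ?thesis unfolding b_def[symmetric] by linarith
qed

lemma quad_form_Schur_complement_pos:
  assumes sym: "\<And>i j. q i j = q j i"
    and pos: "\<And>c. (\<exists>i<Suc n. c i \<noteq> 0) \<Longrightarrow> quad_form q (Suc n) c > 0"
  shows "q n n > 0"
    and "\<exists>i<n. c i \<noteq> 0 \<Longrightarrow> quad_form (\<lambda>i j. q i j - q i n * q j n / q n n) n c > 0"
proof -
  show "q n n > 0" using pos[of "\<lambda>i. if i = n then 1 else 0"] unfolding quad_form_def by simp
  assume "\<exists>i<n. c i \<noteq> 0"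
  define b where "b c = (\<Sum>i<n. c i * q i n)" for c
  define c' where "c' = c(n := - b c / q n n)"
  have "b c' = b c" unfolding b_def c'_def by (intro sum.cong) auto
  moreover have "quad_form (\<lambda>i j. q i j - q i n * q j n / q n n) n c'
      = quad_form (\<lambda>i j. q i j - q i n * q j n / q n n) n c"
    by (rule quad_form_cong) (simp add: c'_def)
  moreover have "quad_form q (Suc n) c' > 0" using \<open>\<exists>i<n. c i \<noteq> 0\<close> by (intro pos) (auto simp: c'_def)
  ultimately show "quad_form (\<lambda>i j. q i j - q i n * q j n / q n n) n c > 0"
    using quad_form_Suc_complete_square[where q = q and n = n and c = c', OF sym] \<open>q n n > 0\<close> by (simp add: c'_def b_def)
qed

lemma quad_form_coercive_Suc:
  assumes sym: "\<And>i j. q i j = q j i" and d: "q n n > 0" and "e > 0"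
    and e: "\<And>c. e * (\<Sum>i<n. (c i)\<^sup>2) \<le> quad_form (\<lambda>i j. q i j - q i n * q j n / q n n) n c"
  shows "\<exists>e'>0. \<forall>c. e' * (\<Sum>i<Suc n. (c i)\<^sup>2) \<le> quad_form q (Suc n) c"
proof -
  define K where "K = (\<Sum>i<n. (q i n)\<^sup>2)"
  have "K \<ge> 0" unfolding K_def by (simp add: sum_nonneg)
  define e' where "e' = min (e / (1 + 2 * K / (q n n)\<^sup>2)) (q n n / 2)"
  have "e' > 0" unfolding e'_def using \<open>e > 0\<close> d \<open>K \<ge> 0\<close> by (simp add: add_pos_nonneg)
  have "e' * (\<Sum>i<Suc n. (c i)\<^sup>2) \<le> quad_form q (Suc n) c" for c
  proof -
    define S b where "S = (\<Sum>i<n. (c i)\<^sup>2)" and "b = (\<Sum>i<n. c i * q i n) / q n n"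
    define w where "w = c n + b"
    have "S \<ge> 0" unfolding S_def by (simp add: sum_nonneg)
    have "b\<^sup>2 \<le> S * K / (q n n)\<^sup>2"
      using Cauchy_Schwarz_ineq_sum[of c "\<lambda>i. q i n" "{..<n}"] d
      unfolding b_def S_def K_def by (simp add: power_divide divide_right_mono)
    moreover have "(c n)\<^sup>2 \<le> 2 * w\<^sup>2 + 2 * b\<^sup>2"
      using sum_squares_ge_zero[of "w + b" 0] unfolding w_def by (simp add: power2_eq_square algebra_simps)
    ultimately have "e' * (S + (c n)\<^sup>2) \<le> e' * (S + 2 * w\<^sup>2 + 2 * (S * K / (q n n)\<^sup>2))"
      using \<open>e' > 0\<close> by (intro mult_left_mono) auto
    also have "\<dots> = e' * (1 + 2 * K / (q n n)\<^sup>2) * S + (2 * e') * w\<^sup>2"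
      by (simp add: algebra_simps)
    also have "\<dots> \<le> e * S + q n n * w\<^sup>2"
    proof (intro add_mono mult_right_mono)
      have "1 + 2 * K / (q n n)\<^sup>2 > 0" using \<open>K \<ge> 0\<close> d by (simp add: add_pos_nonneg)
      moreover have "e' \<le> e / (1 + 2 * K / (q n n)\<^sup>2)" unfolding e'_def by simp
      ultimately show "e' * (1 + 2 * K / (q n n)\<^sup>2) \<le> e" by (simp add: le_divide_eq)
    qed (use \<open>S \<ge> 0\<close> e'_def in auto)
    also have "\<dots> \<le> quad_form q (Suc n) c"
      using quad_form_Suc_complete_square[where q = q and n = n and c = c, OF sym] e[of c] d unfolding S_def w_def b_def by simp
    finally show ?thesis unfolding S_def by simp
  qed
  then show ?thesis using \<open>e' > 0\<close> by blast
qed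

lemma quad_form_coercive_sym:
  assumes "\<And>i j. q i j = q j i"
    and "\<And>c. (\<exists>i<n. c i \<noteq> 0) \<Longrightarrow> quad_form q n c > 0"
  shows "\<exists>e>0. \<forall>c. e * (\<Sum>i<n. (c i)\<^sup>2) \<le> quad_form q n c"
  using assms
proof (induction n arbitrary: q)
  case 0
  then show ?case by (intro exI[of _ 1]) (simp add: quad_form_def)
next
  case (Suc n)
  have "\<exists>e>0. \<forall>c. e * (\<Sum>i<n. (c i)\<^sup>2) \<le> quad_form (\<lambda>i j. q i j - q i n * q j n / q n n) n c"
    using Suc.prems quad_form_Schur_complement_pos[of q n]
    by (intro Suc.IH) (auto simp: mult.commute)
  then obtain e where "e > 0"
    "\<And>c. e * (\<Sum>i<n. (c i)\<^sup>2) \<le> quad_form (\<lambda>i j. q i j - q i n * q j n / q n n) n c"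
    by blast
  then show ?case
    using quad_form_coercive_Suc[of q n e] quad_form_Schur_complement_pos(1)[of q n] Suc.prems by blast
qed

lemma quad_form_coercive:
  assumes "\<And>c. (\<exists>i<n. c i \<noteq> 0) \<Longrightarrow> quad_form q n c > 0"
  shows "\<exists>e>0. \<forall>c. e * (\<Sum>i<n. (c i)\<^sup>2) \<le> quad_form q n c"
  using quad_form_coercive_sym[of "\<lambda>i j. (q i j + q j i) / 2" n] assms
  by (simp add: add.commute quad_form_symmetrize[symmetric])

lemma quad_form_ratio_bounded:
  assumes "\<And>c. (\<exists>i<n. c i \<noteq> 0) \<Longrightarrow> quad_form m n c > 0"
  shows "\<exists>B. \<forall>c. (\<exists>i<n. c i \<noteq> 0) \<longrightarrow> quad_form q n c / quad_form m n c \<le> B"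
proof -
  obtain e where e: "e > 0" "\<And>c. e * (\<Sum>i<n. (c i)\<^sup>2) \<le> quad_form m n c"
    using quad_form_coercive[OF assms] by blast
  define K where "K = (\<Sum>i<n. \<Sum>j<n. \<bar>q i j\<bar>)"
  have "quad_form q n c / quad_form m n c \<le> K / e" if c: "\<exists>i<n. c i \<noteq> 0" for c
  proof -
    define S where "S = (\<Sum>i<n. (c i)\<^sup>2)"
    have "S > 0" using c unfolding S_def by (metis lessThan_iff sum_pos2 finite_lessThan zero_le_power2 zero_less_power2)
    have "K \<ge> 0" unfolding K_def by (simp add: sum_nonneg)
    have "e * S \<le> quad_form m n c" "e * S > 0" using e \<open>S > 0\<close> unfolding S_def by auto
    have "quad_form q n c / quad_form m n c \<le> K * S / quad_form m n c"
      using quad_form_le[of q n c] assms[OF c] unfolding K_def S_def by (simp add: divide_right_mono)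
    also have "\<dots> \<le> K * S / (e * S)"
      using \<open>e * S \<le> quad_form m n c\<close> \<open>e * S > 0\<close> \<open>K \<ge> 0\<close> \<open>S > 0\<close>
      by (intro divide_left_mono) auto
    finally show ?thesis using \<open>S > 0\<close> by simp
  qed
  then show ?thesis by blast
qed

section \<open>Min-max levels of Rayleigh quotients\<close>

definition minmax_admissible :: "(('a \<Rightarrow> real) \<Rightarrow> bool) \<Rightarrow> (('a \<Rightarrow> real) \<Rightarrow> real) \<Rightarrow> nat
    \<Rightarrow> (nat \<Rightarrow> 'a \<Rightarrow> real) \<Rightarrow> bool" where
  "minmax_admissible T M k f \<longleftrightarrow>
     (\<forall>i<k. T (f i)) \<and> (\<forall>c. (\<exists>i<k. c i \<noteq> 0) \<longrightarrow> M (lincomb f c k) > 0)"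

definition rayleigh_values :: "(('a \<Rightarrow> real) \<Rightarrow> real) \<Rightarrow> (('a \<Rightarrow> real) \<Rightarrow> real) \<Rightarrow> nat
    \<Rightarrow> (nat \<Rightarrow> 'a \<Rightarrow> real) \<Rightarrow> real set" where
  "rayleigh_values Q M k f = {Q (lincomb f c k) / M (lincomb f c k) | c. \<exists>i<k. c i \<noteq> 0}"

lemma minmax_level_eq_Inf_Sup:
  "minmax_level T Q M k = Inf {Sup (rayleigh_values Q M k f) | f. minmax_admissible T M k f}"
  unfolding minmax_level_def rayleigh_values_def minmax_admissible_def by simp

definition quadratic_on :: "(('a \<Rightarrow> real) \<Rightarrow> real) \<Rightarrow> nat \<Rightarrow> (nat \<Rightarrow> 'a \<Rightarrow> real) \<Rightarrow> bool" where
  "quadratic_on Q k f \<longleftrightarrow> (\<exists>q. \<forall>c. Q (lincomb f c k) = quad_form q k c)"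

lemma quadratic_on_add:
  assumes "quadratic_on Q k f" "quadratic_on R k f"
  shows "quadratic_on (\<lambda>u. Q u + R u) k f"
  using assms unfolding quadratic_on_def by (metis quad_form_add)

lemma quadratic_on_cmult:
  assumes "quadratic_on Q k f"
  shows "quadratic_on (\<lambda>u. r * Q u) k f"
  using assms unfolding quadratic_on_def by (metis quad_form_cmult)

lemma quadratic_on_sum:
  assumes "finite L" "\<And>l. l \<in> L \<Longrightarrow> quadratic_on (Q l) k f"
  shows "quadratic_on (\<lambda>u. \<Sum>l\<in>L. Q l u) k f"
  using assms
proof (induction L rule: finite_induct)
  case empty
  show ?case unfolding quadratic_on_def by (intro exI[of _ "\<lambda>_ _. 0"]) (simp add: quad_form_def)
next
  case (insert l L)
  then show ?case by (simp add: quadratic_on_add)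
qed

lemma quadratic_on_point_square: "quadratic_on (\<lambda>u. (u x)\<^sup>2) k f"
  unfolding quadratic_on_def lincomb_def by (metis square_sum_eq_quad_form)

lemma quadratic_on_integral:
  assumes "\<And>i j. i < k \<Longrightarrow> j < k \<Longrightarrow> h i j integrable_on S"
    and "\<And>c x. x \<in> S \<Longrightarrow> E (lincomb f c k) x = quad_form (\<lambda>i j. h i j x) k c"
  shows "quadratic_on (\<lambda>u. integral S (E u)) k f"
  unfolding quadratic_on_def
proof (intro exI allI)
  fix c
  have "integral S (E (lincomb f c k)) = integral S (\<lambda>x. \<Sum>i<k. \<Sum>j<k. c i * c j * h i j x)"
    using assms(2) unfolding quad_form_def by (intro integral_cong) auto
  also have "\<dots> = (\<Sum>i<k. \<Sum>j<k. c i * c j * integral S (h i j))"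
    using assms(1)
    by (intro integral_unique has_integral_sum has_integral_mult_right integrable_integral) auto
  finally show "integral S (E (lincomb f c k)) = quad_form (\<lambda>i j. integral S (h i j)) k c"
    unfolding quad_form_def .
qed

text \<open>Boundedness is essential below: \<open>Sup\<close> of a set of reals that is not bounded above is
  unspecified.\<close>

lemma bdd_above_rayleigh_values:
  assumes "minmax_admissible T M k f" "quadratic_on Q k f" "quadratic_on M k f"
  shows "bdd_above (rayleigh_values Q M k f)"
proof -
  obtain q m where q: "\<And>c. Q (lincomb f c k) = quad_form q k c"
    and m: "\<And>c. M (lincomb f c k) = quad_form m k c"
    using assms(2,3) unfolding quadratic_on_def by blast
  have "\<And>c. (\<exists>i<k. c i \<noteq> 0) \<Longrightarrow> quad_form m k c > 0"
    using assms(1) m unfolding minmax_admissible_def by metis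
  from quad_form_ratio_bounded[OF this, of q] show ?thesis
    unfolding rayleigh_values_def bdd_above_def q m by blast
qed

lemma le_Sup_rayleigh_values:
  assumes "minmax_admissible T M k f" "quadratic_on Q k f" "quadratic_on M k f"
    and "\<exists>i<k. c i \<noteq> 0" "\<mu> * M (lincomb f c k) \<le> Q (lincomb f c k)"
  shows "\<mu> \<le> Sup (rayleigh_values Q M k f)"
proof -
  have "M (lincomb f c k) > 0" using assms(1,4) unfolding minmax_admissible_def by blast
  then have "\<mu> \<le> Q (lincomb f c k) / M (lincomb f c k)" using assms(5) by (simp add: pos_le_divide_eq)
  also have "\<dots> \<le> Sup (rayleigh_values Q M k f)"
    using assms(4) bdd_above_rayleigh_values[OF assms(1-3)]
    by (intro cSup_upper) (auto simp: rayleigh_values_def)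
  finally show ?thesis .
qed

lemma minmax_level_ge:
  assumes "\<exists>f. minmax_admissible T M k f"
    and "\<And>f. minmax_admissible T M k f \<Longrightarrow> quadratic_on Q k f \<and> quadratic_on M k f"
    and "\<And>f. minmax_admissible T M k f \<Longrightarrow>
           \<exists>c. (\<exists>i<k. c i \<noteq> 0) \<and> \<mu> * M (lincomb f c k) \<le> Q (lincomb f c k)"
  shows "\<mu> \<le> minmax_level T Q M k"
  unfolding minmax_level_eq_Inf_Sup
  using assms le_Sup_rayleigh_values by (intro cInf_greatest) blast+

lemma minmax_level_le:
  assumes "\<And>f. minmax_admissible T M k f \<Longrightarrow> quadratic_on Q k f \<and> quadratic_on M k f"
    and "\<And>f. minmax_admissible T M k f \<Longrightarrow>
           \<exists>c. (\<exists>i<k. c i \<noteq> 0) \<and> \<mu> * M (lincomb f c k) \<le> Q (lincomb f c k)"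
    and f: "minmax_admissible T M k f" and "k \<ge> 1"
    and "\<And>c. (\<exists>i<k. c i \<noteq> 0) \<Longrightarrow> Q (lincomb f c k) \<le> \<nu> * M (lincomb f c k)"
  shows "minmax_level T Q M k \<le> \<nu>"
proof -
  have "bdd_below {Sup (rayleigh_values Q M k f) | f. minmax_admissible T M k f}"
    using assms(1,2) le_Sup_rayleigh_values unfolding bdd_below_def by blast
  then have "minmax_level T Q M k \<le> Sup (rayleigh_values Q M k f)"
    unfolding minmax_level_eq_Inf_Sup using f by (intro cInf_lower) blast+
  also have "\<dots> \<le> \<nu>"
  proof (rule cSup_least)
    show "rayleigh_values Q M k f \<noteq> {}"
      using \<open>k \<ge> 1\<close> unfolding rayleigh_values_def by (auto intro!: exI[of _ "\<lambda>_. 1"] exI[of _ 0])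
    fix x assume "x \<in> rayleigh_values Q M k f"
    then obtain c where c: "\<exists>i<k. c i \<noteq> 0" "x = Q (lincomb f c k) / M (lincomb f c k)"
      unfolding rayleigh_values_def by blast
    have "M (lincomb f c k) > 0" using f c(1) unfolding minmax_admissible_def by blast
    then show "x \<le> \<nu>" using assms(5)[OF c(1)] unfolding c(2) by (simp add: pos_divide_le_eq)
  qed
  finally show ?thesis .
qed

section \<open>The first Robin eigenvalue of an interval\<close>

lemma robin_angle_exists:
  assumes "\<alpha> > 0" "l > 0"
  shows "\<exists>\<theta>. 0 < \<theta> \<and> \<theta> < pi/2 \<and> 2 * \<theta> * tan \<theta> = \<alpha> * l"
proof -
  define b where "b = arctan (1 + \<alpha> * l)"
  have "\<alpha> * l > 0" using assms by simp
  have "b < pi/2" unfolding b_def by (rule arctan_ubound)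
  have "pi/4 \<le> b" unfolding b_def using \<open>\<alpha> * l > 0\<close> arctan_le_iff[of 1 "1 + \<alpha> * l"] arctan_one by simp
  then have "2 * (pi/4) * (1 + \<alpha> * l) \<le> 2 * b * tan b"
    unfolding b_def tan_arctan using \<open>\<alpha> * l > 0\<close> by (intro mult_right_mono) auto
  moreover have "1 * (1 + \<alpha> * l) \<le> 2 * (pi/4) * (1 + \<alpha> * l)"
    using pi_gt3 \<open>\<alpha> * l > 0\<close> by (intro mult_right_mono) auto
  moreover have "continuous_on {0..b} (\<lambda>t. 2 * t * tan t)"
  proof -
    have "cos t \<noteq> 0" if "t \<in> {0..b}" for t
      using that \<open>b < pi/2\<close> pi_gt3 cos_gt_zero_pi[of t] by auto
    then show ?thesis by (intro continuous_intros continuous_on_tan) auto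
  qed
  ultimately obtain t where "0 \<le> t" "t \<le> b" "2 * t * tan t = \<alpha> * l"
    using IVT'[of "\<lambda>t. 2 * t * tan t" 0 "\<alpha> * l" b] \<open>\<alpha> * l > 0\<close> \<open>pi/4 \<le> b\<close> pi_gt3 by auto
  moreover have "t \<noteq> 0" using \<open>2 * t * tan t = \<alpha> * l\<close> \<open>\<alpha> * l > 0\<close> by auto
  ultimately show ?thesis using \<open>b < pi/2\<close> by (intro exI[of _ t]) auto
qed

text \<open>The first Robin eigenfunction of an interval of length \<open>l\<close> is \<open>cos (\<omega> (x - l/2))\<close>, where
  the boundary condition forces \<open>\<omega> tan (\<omega> l/2) = \<alpha>\<close>; with \<open>\<theta> = \<omega> l/2\<close> this is
  \<open>2 \<theta> tan \<theta> = \<alpha> l\<close>, and the eigenvalue is \<open>\<omega>\<^sup>2 = (2 \<theta> / l)\<^sup>2\<close>.\<close>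

definition robin_angle :: "real \<Rightarrow> real \<Rightarrow> real" where
  "robin_angle \<alpha> l = (SOME \<theta>. 0 < \<theta> \<and> \<theta> < pi/2 \<and> 2 * \<theta> * tan \<theta> = \<alpha> * l)"

definition robin_freq :: "real \<Rightarrow> real \<Rightarrow> real" where
  "robin_freq \<alpha> l = 2 * robin_angle \<alpha> l / l"

definition robin_first_eig :: "real \<Rightarrow> real \<Rightarrow> real" where
  "robin_first_eig \<alpha> l = (robin_freq \<alpha> l)\<^sup>2"

lemma robin_angleD:
  assumes "\<alpha> > 0" "l > 0"
  shows "0 < robin_angle \<alpha> l" "robin_angle \<alpha> l < pi/2"
    "2 * robin_angle \<alpha> l * tan (robin_angle \<alpha> l) = \<alpha> * l"
  using someI_ex[OF robin_angle_exists[OF assms]] unfolding robin_angle_def by auto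

lemma robin_freq_tan:
  assumes "\<alpha> > 0" "l > 0"
  shows "robin_freq \<alpha> l * tan (robin_angle \<alpha> l) = \<alpha>"
  using robin_angleD(3)[OF assms] assms(2) unfolding robin_freq_def by (simp add: field_simps)

lemma robin_angle_mono:
  assumes "\<alpha> > 0" "0 < x" "x \<le> y"
  shows "robin_angle \<alpha> x \<le> robin_angle \<alpha> y"
proof (rule ccontr)
  define s where "s = robin_angle \<alpha> y"
  define t where "t = robin_angle \<alpha> x"
  assume "\<not> robin_angle \<alpha> x \<le> robin_angle \<alpha> y"
  then have "s < t" unfolding s_def t_def by simp
  have hy: "0 < s" "2 * s * tan s = \<alpha> * y" and hx: "t < pi/2" "2 * t * tan t = \<alpha> * x"
    using robin_angleD[OF assms(1), of x] robin_angleD[OF assms(1), of y] assms unfolding s_def t_def by auto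
  have "tan s < tan t" using \<open>s < t\<close> hy hx by (intro tan_monotone) auto
  moreover have "0 < tan s" using hy hx \<open>s < t\<close> by (intro tan_gt_zero) auto
  ultimately have "2 * s * tan s < 2 * t * tan t"
    using mult_strict_mono[of "2 * s" "2 * t" "tan s" "tan t"] \<open>s < t\<close> hy by simp
  moreover have "\<alpha> * x \<le> \<alpha> * y" using assms by (intro mult_left_mono) auto
  ultimately show False using hx hy by simp
qed

lemma cos_robin_phase_pos:
  assumes "\<alpha> > 0" "a < b" "x \<in> {a..b}"
  shows "cos (robin_freq \<alpha> (b - a) * (x - (a + b) / 2)) > 0"
proof -
  define \<omega> where "\<omega> = robin_freq \<alpha> (b - a)"
  have "\<omega> > 0" unfolding \<omega>_def robin_freq_def using robin_angleD[of \<alpha> "b - a"] assms by simp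
  have "\<bar>x - (a + b) / 2\<bar> \<le> (b - a) / 2" using assms(3) by (auto simp: abs_le_iff field_simps)
  then have "\<bar>\<omega> * (x - (a + b) / 2)\<bar> \<le> \<omega> * ((b - a) / 2)"
    using \<open>\<omega> > 0\<close> by (simp add: abs_mult mult_left_mono)
  also have "\<dots> = robin_angle \<alpha> (b - a)" unfolding \<omega>_def robin_freq_def using assms by simp
  also have "\<dots> < pi/2" using robin_angleD(2)[of \<alpha> "b - a"] assms by simp
  finally show ?thesis unfolding \<omega>_def by (intro cos_gt_zero_pi) auto
qed

text \<open>If \<open>\<psi>' = -(\<omega>\<^sup>2 + \<psi>\<^sup>2)\<close>, then
  \<open>(\<psi> w\<^sup>2)' = w'\<^sup>2 - \<omega>\<^sup>2 w\<^sup>2 - (w' - \<psi> w)\<^sup>2\<close>.\<close>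

lemma riccati_energy_identity:
  fixes w w' \<psi> :: "real \<Rightarrow> real"
  assumes "a \<le> b"
    and w: "\<And>x. x \<in> {a..b} \<Longrightarrow> (w has_real_derivative w' x) (at x)"
    and w': "continuous_on {a..b} w'"
    and \<psi>: "\<And>x. x \<in> {a..b} \<Longrightarrow> (\<psi> has_real_derivative - (\<omega>\<^sup>2 + (\<psi> x)\<^sup>2)) (at x)"
  shows "integral {a..b} (\<lambda>x. (w' x)\<^sup>2) + \<psi> a * (w a)\<^sup>2 - \<psi> b * (w b)\<^sup>2
       = \<omega>\<^sup>2 * integral {a..b} (\<lambda>x. (w x)\<^sup>2) + integral {a..b} (\<lambda>x. (w' x - \<psi> x * w x)\<^sup>2)"
proof -
  define F' where "F' x = - (\<omega>\<^sup>2 + (\<psi> x)\<^sup>2) * (w x)\<^sup>2 + \<psi> x * (2 * w x * w' x)" for x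
  have "((\<lambda>x. \<psi> x * (w x)\<^sup>2) has_real_derivative F' x) (at x)" if "x \<in> {a..b}" for x
    unfolding F'_def by (auto intro!: derivative_eq_intros w[OF that] \<psi>[OF that])
  then have ftc: "(F' has_integral \<psi> b * (w b)\<^sup>2 - \<psi> a * (w a)\<^sup>2) {a..b}"
    using assms(1)
    by (intro fundamental_theorem_of_calculus)
       (auto simp: has_real_derivative_iff_has_vector_derivative[symmetric] intro: has_field_derivative_at_within)
  have cont: "continuous_on {a..b} w" "continuous_on {a..b} \<psi>"
    using w \<psi> by (intro continuous_at_imp_continuous_on ballI DERIV_isCont; blast)+
  have "(w' x)\<^sup>2 = F' x + \<omega>\<^sup>2 * (w x)\<^sup>2 + (w' x - \<psi> x * w x)\<^sup>2" for x
    unfolding F'_def by (simp add: power2_eq_square algebra_simps)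
  moreover have "(\<lambda>x. \<omega>\<^sup>2 * (w x)\<^sup>2) integrable_on {a..b}"
    "(\<lambda>x. (w' x - \<psi> x * w x)\<^sup>2) integrable_on {a..b}"
    by (intro integrable_continuous_interval continuous_intros cont w')+
  ultimately have "integral {a..b} (\<lambda>x. (w' x)\<^sup>2)
      = integral {a..b} F' + \<omega>\<^sup>2 * integral {a..b} (\<lambda>x. (w x)\<^sup>2)
        + integral {a..b} (\<lambda>x. (w' x - \<psi> x * w x)\<^sup>2)"
    using ftc by (simp add: integral_add integrable_add has_integral_integrable)
  then show ?thesis using integral_unique[OF ftc] by simp
qed

lemma robin_energy_identity:
  assumes "\<alpha> > 0" "a < b"
    and "\<And>x. x \<in> {a..b} \<Longrightarrow> (w has_real_derivative w' x) (at x)" "continuous_on {a..b} w'"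
  defines "\<omega> \<equiv> robin_freq \<alpha> (b - a)"
  shows "integral {a..b} (\<lambda>x. (w' x)\<^sup>2) + \<alpha> * ((w a)\<^sup>2 + (w b)\<^sup>2)
       = robin_first_eig \<alpha> (b - a) * integral {a..b} (\<lambda>x. (w x)\<^sup>2)
         + integral {a..b} (\<lambda>x. (w' x + \<omega> * tan (\<omega> * (x - (a + b) / 2)) * w x)\<^sup>2)"
proof -
  define \<psi> where "\<psi> x = - \<omega> * tan (\<omega> * (x - (a + b) / 2))" for x
  have "(\<psi> has_real_derivative - (\<omega>\<^sup>2 + (\<psi> x)\<^sup>2)) (at x)" if "x \<in> {a..b}" for x
  proof -
    have c: "cos (\<omega> * (x - (a + b) / 2)) \<noteq> 0"
      using cos_robin_phase_pos[OF assms(1,2) that] unfolding \<omega>_def by simp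
    then have sec: "inverse ((cos (\<omega> * (x - (a + b) / 2)))\<^sup>2) = 1 + (tan (\<omega> * (x - (a + b) / 2)))\<^sup>2"
      by (simp add: tan_sec power_inverse)
    have "((\<lambda>x. \<omega> * (x - (a + b) / 2)) has_real_derivative \<omega>) (at x)"
      by (auto intro!: derivative_eq_intros)
    from DERIV_cmult[OF DERIV_chain2[OF DERIV_tan[OF c] this], of "- \<omega>"] show ?thesis
      unfolding \<psi>_def sec by (simp add: power2_eq_square algebra_simps)
  qed
  note identity = riccati_energy_identity[OF _ assms(3,4) this]
  have "\<omega> * ((b - a) / 2) = robin_angle \<alpha> (b - a)" unfolding \<omega>_def robin_freq_def using assms by simp
  then have "\<psi> a = \<alpha>" "\<psi> b = - \<alpha>"
    using robin_freq_tan[of \<alpha> "b - a"] assms unfolding \<psi>_def \<omega>_def by (simp_all add: field_simps)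
  then show ?thesis
    using identity assms(2) unfolding \<psi>_def robin_first_eig_def \<omega>_def by (simp add: algebra_simps)
qed

lemma integral_square_nonneg: "integral S (\<lambda>x. (f x)\<^sup>2 :: real) \<ge> 0"
  by (cases "(\<lambda>x. (f x)\<^sup>2) integrable_on S") (simp_all add: integral_nonneg not_integrable_integral)

lemma robin_poincare:
  assumes "\<alpha> > 0" "a < b"
    and "\<And>x. x \<in> {a..b} \<Longrightarrow> (w has_real_derivative w' x) (at x)" "continuous_on {a..b} w'"
  shows "robin_first_eig \<alpha> (b - a) * integral {a..b} (\<lambda>x. (w x)\<^sup>2)
       \<le> integral {a..b} (\<lambda>x. (w' x)\<^sup>2) + \<alpha> * ((w a)\<^sup>2 + (w b)\<^sup>2)"
  using robin_energy_identity[OF assms] integral_square_nonneg by simp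

definition robin_mode :: "real \<Rightarrow> real \<Rightarrow> real \<Rightarrow> real" where
  "robin_mode \<alpha> l x = cos (robin_freq \<alpha> l * (x - l / 2))"

definition robin_mode_deriv :: "real \<Rightarrow> real \<Rightarrow> real \<Rightarrow> real" where
  "robin_mode_deriv \<alpha> l x = - robin_freq \<alpha> l * sin (robin_freq \<alpha> l * (x - l / 2))"

lemma robin_mode_has_derivative: "(robin_mode \<alpha> l has_real_derivative robin_mode_deriv \<alpha> l x) (at x)"
  unfolding robin_mode_def robin_mode_deriv_def by (auto intro!: derivative_eq_intros)

lemma continuous_on_robin_mode: "continuous_on S (robin_mode \<alpha> l)"
  unfolding robin_mode_def by (intro continuous_intros)

lemma continuous_on_robin_mode_deriv: "continuous_on S (robin_mode_deriv \<alpha> l)"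
  unfolding robin_mode_deriv_def by (intro continuous_intros)

lemma robin_mode_symmetric:
  "robin_mode \<alpha> l (l - x) = robin_mode \<alpha> l x" "robin_mode_deriv \<alpha> l (l - x) = - robin_mode_deriv \<alpha> l x"
proof -
  have "robin_freq \<alpha> l * (l - x - l / 2) = - (robin_freq \<alpha> l * (x - l / 2))" by (simp add: algebra_simps)
  then show "robin_mode \<alpha> l (l - x) = robin_mode \<alpha> l x" "robin_mode_deriv \<alpha> l (l - x) = - robin_mode_deriv \<alpha> l x"
    unfolding robin_mode_def robin_mode_deriv_def by (metis cos_minus, metis sin_minus mult_minus_right minus_minus)
qed

lemma robin_mode_deriv_centre: "robin_mode_deriv \<alpha> l (l / 2) = 0"
  unfolding robin_mode_deriv_def by simp

lemma integral_pos_if_pos_at: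
  fixes f :: "real \<Rightarrow> real"
  assumes "a < b" "continuous_on {a..b} f" "\<And>x. x \<in> {a..b} \<Longrightarrow> f x \<ge> 0" "z \<in> {a..b}" "f z > 0"
  shows "integral {a..b} f > 0"
proof -
  have int: "f integrable_on {a..b}" using assms(2) by (rule integrable_continuous_interval)
  have "integral {a..b} f \<noteq> 0"
  proof
    assume "integral {a..b} f = 0"
    then have "(f has_integral 0) (cbox a b)" using int by (metis box_real(2) integrable_integral)
    then have "f z = 0" using assms by (intro has_integral_0_cbox_imp_0[of a b f]) auto
    then show False using assms(5) by simp
  qed
  moreover have "integral {a..b} f \<ge> 0" using assms(3) by (intro integral_nonneg int) auto
  ultimately show ?thesis by simp
qed

lemma robin_mode_mass_pos:
  assumes "l > 0"
  shows "integral {0..l} (\<lambda>x. (robin_mode \<alpha> l x)\<^sup>2) > 0"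
  using assms
  by (intro integral_pos_if_pos_at[where z = "l/2"])
     (auto intro!: continuous_intros continuous_on_robin_mode simp: robin_mode_def)

lemma robin_mode_energy:
  assumes "\<alpha> > 0" "l > 0"
  shows "integral {0..l} (\<lambda>x. (robin_mode_deriv \<alpha> l x)\<^sup>2)
           + \<alpha> * ((robin_mode \<alpha> l 0)\<^sup>2 + (robin_mode \<alpha> l l)\<^sup>2)
       = robin_first_eig \<alpha> l * integral {0..l} (\<lambda>x. (robin_mode \<alpha> l x)\<^sup>2)"
proof -
  define \<omega> where "\<omega> = robin_freq \<alpha> l"
  have "robin_mode_deriv \<alpha> l x + \<omega> * tan (\<omega> * (x - (0 + l) / 2)) * robin_mode \<alpha> l x = 0"
    if "x \<in> {0..l}" for x
    using cos_robin_phase_pos[OF assms(1,2) that]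
    unfolding robin_mode_def robin_mode_deriv_def \<omega>_def by (simp add: tan_def)
  then have "integral {0..l}
      (\<lambda>x. (robin_mode_deriv \<alpha> l x + \<omega> * tan (\<omega> * (x - (0 + l) / 2)) * robin_mode \<alpha> l x)\<^sup>2)
      = integral {0..l} (\<lambda>_. 0)"
    by (intro integral_cong) simp
  then show ?thesis
    using robin_energy_identity[OF assms(1,2) robin_mode_has_derivative continuous_on_robin_mode_deriv]
    unfolding \<omega>_def by simp
qed

section \<open>Convexity of the first Robin eigenvalue in the logarithm of the length\<close>

lemma cauchy_mean_value_closed:
  fixes F G F' G' :: "real \<Rightarrow> real"
  assumes "a \<le> b"
    and "\<And>t. t \<in> {a..b} \<Longrightarrow> (F has_real_derivative F' t) (at t)"
    and "\<And>t. t \<in> {a..b} \<Longrightarrow> (G has_real_derivative G' t) (at t)"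
  shows "\<exists>\<xi>\<in>{a..b}. (F b - F a) * G' \<xi> = (G b - G a) * F' \<xi>"
proof (cases "a = b")
  case False
  then have "\<exists>\<xi>>a. \<xi> < b \<and> (F b - F a) * G' \<xi> = (G b - G a) * F' \<xi>"
    using assms by (intro GMVT') (auto intro: DERIV_isCont)
  then show ?thesis by (auto intro: less_imp_le)
qed auto

lemma midpoint_convex_if_derivative_ratio_mono:
  fixes F G F' G' :: "real \<Rightarrow> real"
  assumes "t1 \<le> t3" "t3 \<le> t2"
    and F: "\<And>t. t \<in> {t1..t2} \<Longrightarrow> (F has_real_derivative F' t) (at t)"
    and G: "\<And>t. t \<in> {t1..t2} \<Longrightarrow> (G has_real_derivative G' t) (at t)"
    and G'_pos: "\<And>t. t \<in> {t1..t2} \<Longrightarrow> G' t > 0"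
    and mono: "mono_on {t1..t2} (\<lambda>t. F' t / G' t)"
    and equal_steps: "G t3 - G t1 = G t2 - G t3"
  shows "2 * F t3 \<le> F t1 + F t2"
proof -
  have step: "\<exists>\<xi>\<in>{a..b}. F b - F a = (G b - G a) * (F' \<xi> / G' \<xi>)"
    if "t1 \<le> a" "a \<le> b" "b \<le> t2" for a b
  proof -
    have "\<exists>\<xi>\<in>{a..b}. (F b - F a) * G' \<xi> = (G b - G a) * F' \<xi>"
      by (intro cauchy_mean_value_closed F G) (use that in auto)
    then obtain \<xi> where "\<xi> \<in> {a..b}" "(F b - F a) * G' \<xi> = (G b - G a) * F' \<xi>" by blast
    moreover have "G' \<xi> > 0" using G'_pos \<open>\<xi> \<in> {a..b}\<close> that by auto
    ultimately have "F b - F a = (G b - G a) * (F' \<xi> / G' \<xi>)" by (simp add: field_simps)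
    then show ?thesis using \<open>\<xi> \<in> {a..b}\<close> by blast
  qed
  obtain \<xi>1 where \<xi>1: "\<xi>1 \<in> {t1..t3}" "F t3 - F t1 = (G t3 - G t1) * (F' \<xi>1 / G' \<xi>1)"
    using step[of t1 t3] assms(1,2) by auto
  obtain \<xi>2 where \<xi>2: "\<xi>2 \<in> {t3..t2}" "F t2 - F t3 = (G t2 - G t3) * (F' \<xi>2 / G' \<xi>2)"
    using step[of t3 t2] assms(1,2) by auto
  have "\<exists>\<xi>\<in>{t1..t3}. (G t3 - G t1) * 1 = (t3 - t1) * G' \<xi>"
    by (intro cauchy_mean_value_closed G DERIV_ident) (use assms(1,2) in auto)
  then obtain \<xi> where "\<xi> \<in> {t1..t3}" "(G t3 - G t1) * 1 = (t3 - t1) * G' \<xi>" by blast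
  then have "G t3 - G t1 \<ge> 0" using G'_pos[of \<xi>] assms(1,2) by simp
  moreover have "F' \<xi>1 / G' \<xi>1 \<le> F' \<xi>2 / G' \<xi>2"
    using \<xi>1(1) \<xi>2(1) assms(1,2) by (intro mono_onD[OF mono]) auto
  ultimately have "F t3 - F t1 \<le> F t2 - F t3"
    unfolding \<xi>1(2) \<xi>2(2) equal_steps[symmetric] by (intro mult_left_mono)
  then show ?thesis by simp
qed

lemma tan_div_self_mono:
  assumes "0 < a" "a \<le> b" "b < pi/2"
  shows "tan a / a \<le> tan b / b"
proof (rule DERIV_nonneg_imp_increasing_open[OF assms(2)])
  fix x assume "a < x" "x < b"
  then have x: "0 < x" "x < pi/2" using assms by auto
  then have "sin x > 0" "cos x > 0" by (auto intro: sin_gt_zero cos_gt_zero_pi)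
  have "sin x * cos x \<le> sin x * 1" using \<open>sin x > 0\<close> by (intro mult_left_mono) auto
  also have "\<dots> \<le> x" using sin_x_le_x[of x] x by simp
  finally have "sin x * cos x \<le> x" .
  then have "tan x \<le> inverse ((cos x)\<^sup>2) * x"
    using \<open>cos x > 0\<close> by (simp add: tan_def field_simps power2_eq_square)
  moreover have "((\<lambda>x. tan x / x) has_real_derivative (inverse ((cos x)\<^sup>2) * x - tan x) / x\<^sup>2) (at x)"
    using x \<open>cos x > 0\<close> by (auto intro!: derivative_eq_intros simp: power2_eq_square)
  ultimately show "\<exists>y. ((\<lambda>x. tan x / x) has_real_derivative y) (at x) \<and> 0 \<le> y" by auto
next
  have "cos x \<noteq> 0 \<and> x \<noteq> 0" if "x \<in> {a..b}" for x
    using that assms cos_gt_zero_pi[of x] by auto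
  then show "continuous_on {a..b} (\<lambda>x. tan x / x)"
    by (intro continuous_intros continuous_on_tan) auto
qed

lemma cot_sq_has_derivative:
  assumes "sin z \<noteq> 0"
  shows "((\<lambda>z. (cot z)\<^sup>2) has_real_derivative - 2 * cos z / (sin z)^3) (at z)"
  using DERIV_power[OF DERIV_cot[OF assms], of 2] assms
  by (simp add: cot_def power3_eq_cube power2_eq_square field_simps)

lemma ln_self_tan_has_derivative:
  assumes "0 < z" "z < pi/2"
  shows "((\<lambda>z. ln (z * tan z)) has_real_derivative 1 / z + 1 / (sin z * cos z)) (at z)"
proof -
  have "sin z > 0" "cos z > 0" using assms by (auto intro: sin_gt_zero cos_gt_zero_pi)
  then have "z * tan z > 0" using assms by (simp add: tan_def)
  have "((\<lambda>z. z * tan z) has_real_derivative tan z + z * inverse ((cos z)\<^sup>2)) (at z)"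
    using \<open>cos z > 0\<close> by (auto intro!: derivative_eq_intros)
  from DERIV_chain2[OF DERIV_ln[OF \<open>z * tan z > 0\<close>] this]
  have "((\<lambda>z. ln (z * tan z)) has_real_derivative
      inverse (z * tan z) * (tan z + z * inverse ((cos z)\<^sup>2))) (at z)" .
  moreover have "inverse (z * tan z) * (tan z + z * inverse ((cos z)\<^sup>2)) = 1 / z + 1 / (sin z * cos z)"
    using assms \<open>sin z > 0\<close> \<open>cos z > 0\<close> by (simp add: tan_def inverse_eq_divide field_simps power2_eq_square)
  ultimately show ?thesis by simp
qed

text \<open>The derivative ratio equals \<open>-2 / (tan\<^sup>2 z + sin\<^sup>2 z tan z / z)\<close>, and the denominator
  is positive and increasing.\<close>

lemma cot_sq_ln_self_tan_ratio_mono: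
  assumes "0 < a" "b < pi/2"
  shows "mono_on {a..b} (\<lambda>z. (- 2 * cos z / (sin z)^3) / (1 / z + 1 / (sin z * cos z)))"
proof -
  define P where "P z = (tan z)\<^sup>2 + (sin z)\<^sup>2 * (tan z / z)" for z :: real
  have trig: "sin z > 0" "cos z > 0" "tan z > 0" if "z \<in> {a..b}" for z
    using that assms by (auto intro: sin_gt_zero cos_gt_zero_pi tan_gt_zero)
  have ratio: "(- 2 * cos z / (sin z)^3) / (1 / z + 1 / (sin z * cos z)) = - 2 / P z"
    if "z \<in> {a..b}" for z
    using trig[OF that] that assms unfolding P_def
    by (simp add: tan_def field_simps power2_eq_square power3_eq_cube)
  have "- 2 / P z \<le> - 2 / P w" if "z \<in> {a..b}" "w \<in> {a..b}" "z \<le> w" for z w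
  proof -
    have "tan z \<le> tan w" "sin z \<le> sin w" "tan z / z \<le> tan w / w"
      using that assms pi_gt3 by (auto intro!: tan_mono_le sin_monotone_2pi_le tan_div_self_mono)
    then have "P z \<le> P w"
      unfolding P_def using trig[OF that(1)] that(1) assms
      by (intro add_mono mult_mono power_mono) auto
    moreover have "P z > 0"
      unfolding P_def using trig[OF that(1)] that(1) assms by (intro add_pos_nonneg) auto
    ultimately show ?thesis by (simp add: frac_le)
  qed
  then show ?thesis by (intro mono_onI) (simp only: ratio)
qed

lemma cot_sq_midpoint_convex:
  assumes "0 < t1" "t1 \<le> t3" "t3 \<le> t2" "t2 < pi/2"
    and "ln (t3 * tan t3) - ln (t1 * tan t1) = ln (t2 * tan t2) - ln (t3 * tan t3)"
  shows "2 * (cot t3)\<^sup>2 \<le> (cot t1)\<^sup>2 + (cot t2)\<^sup>2"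
proof (rule midpoint_convex_if_derivative_ratio_mono[OF assms(2,3) _ _ _
      cot_sq_ln_self_tan_ratio_mono[OF assms(1,4)] assms(5)])
  fix t assume "t \<in> {t1..t2}"
  then have t: "0 < t" "t < pi/2" using assms by auto
  then have "sin t > 0" "cos t > 0" by (auto intro: sin_gt_zero cos_gt_zero_pi)
  show "((\<lambda>z. (cot z)\<^sup>2) has_real_derivative - 2 * cos t / (sin t)^3) (at t)"
    using \<open>sin t > 0\<close> by (intro cot_sq_has_derivative) simp
  show "((\<lambda>z. ln (z * tan z)) has_real_derivative 1 / t + 1 / (sin t * cos t)) (at t)"
    using t by (rule ln_self_tan_has_derivative)
  show "1 / t + 1 / (sin t * cos t) > 0"
    using t \<open>sin t > 0\<close> \<open>cos t > 0\<close> by (simp add: add_pos_pos)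
qed

lemma robin_first_eig_eq_cot:
  assumes "\<alpha> > 0" "l > 0"
  shows "robin_first_eig \<alpha> l = \<alpha>\<^sup>2 * (cot (robin_angle \<alpha> l))\<^sup>2"
proof -
  define \<theta> where "\<theta> = robin_angle \<alpha> l"
  have "sin \<theta> > 0" "cos \<theta> > 0"
    using robin_angleD[OF assms] unfolding \<theta>_def by (auto intro: sin_gt_zero cos_gt_zero_pi)
  then have "robin_freq \<alpha> l = \<alpha> * cot \<theta>"
    using robin_freq_tan[OF assms] unfolding \<theta>_def[symmetric] by (simp add: cot_def tan_def field_simps)
  then show ?thesis unfolding robin_first_eig_def \<theta>_def by (simp add: power_mult_distrib)
qed

lemma ln_robin_angle_tan:
  assumes "\<alpha> > 0" "l > 0"
  shows "ln (robin_angle \<alpha> l * tan (robin_angle \<alpha> l)) = ln (\<alpha> * l / 2)"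
  using robin_angleD(3)[OF assms] by (metis mult.assoc nonzero_mult_div_cancel_left zero_neq_numeral)

lemma ln_geometric_mean_equal_steps:
  assumes "c > 0" "x > 0" "y > 0"
  shows "ln (c * sqrt (x * y)) - ln (c * x) = ln (c * y) - ln (c * sqrt (x * y))"
proof -
  have pos: "c * x > 0" "c * y > 0" "c * sqrt (x * y) > 0" using assms by auto
  have "ln (c * sqrt (x * y)) + ln (c * sqrt (x * y)) = ln (c * sqrt (x * y) * (c * sqrt (x * y)))"
    by (rule ln_mult_pos[OF pos(3) pos(3), symmetric])
  also have "c * sqrt (x * y) * (c * sqrt (x * y)) = c * x * (c * y)"
    using assms by (simp add: algebra_simps)
  also have "ln \<dots> = ln (c * x) + ln (c * y)" by (rule ln_mult_pos[OF pos(1) pos(2)])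
  finally show ?thesis by simp
qed

lemma robin_first_eig_midpoint_log_convex_ordered:
  assumes "\<alpha> > 0" "0 < x" "x \<le> y"
  shows "2 * robin_first_eig \<alpha> (sqrt (x * y)) \<le> robin_first_eig \<alpha> x + robin_first_eig \<alpha> y"
proof -
  define z where "z = sqrt (x * y)"
  have "x \<le> z" "z \<le> y" "z > 0"
    unfolding z_def using assms real_sqrt_le_mono[of "x * x" "x * y"] real_sqrt_le_mono[of "x * y" "y * y"]
    by (auto intro: mult_left_mono mult_right_mono)
  define \<theta> where "\<theta> l = robin_angle \<alpha> l" for l
  have "\<theta> x \<le> \<theta> z" "\<theta> z \<le> \<theta> y"
    unfolding \<theta>_def using \<open>x \<le> z\<close> \<open>z \<le> y\<close> assms by (auto intro!: robin_angle_mono)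
  moreover have "ln (\<alpha> / 2 * z) - ln (\<alpha> / 2 * x) = ln (\<alpha> / 2 * y) - ln (\<alpha> / 2 * z)"
    unfolding z_def using assms by (intro ln_geometric_mean_equal_steps) auto
  moreover have "0 < \<theta> x" "\<theta> y < pi/2"
    using robin_angleD[OF assms(1)] \<open>x \<le> z\<close> \<open>z \<le> y\<close> \<open>z > 0\<close> assms unfolding \<theta>_def by auto
  ultimately have "2 * (cot (\<theta> z))\<^sup>2 \<le> (cot (\<theta> x))\<^sup>2 + (cot (\<theta> y))\<^sup>2"
    using ln_robin_angle_tan[OF assms(1)] \<open>z > 0\<close> assms
    by (intro cot_sq_midpoint_convex) (auto simp: \<theta>_def mult.commute)
  then have "\<alpha>\<^sup>2 * (2 * (cot (\<theta> z))\<^sup>2) \<le> \<alpha>\<^sup>2 * ((cot (\<theta> x))\<^sup>2 + (cot (\<theta> y))\<^sup>2)"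
    by (intro mult_left_mono) auto
  then show ?thesis
    unfolding z_def[symmetric] \<theta>_def
    using robin_first_eig_eq_cot[OF assms(1)] assms \<open>z > 0\<close> by (simp add: algebra_simps)
qed

lemma robin_first_eig_midpoint_log_convex:
  assumes "\<alpha> > 0" "x > 0" "y > 0"
  shows "2 * robin_first_eig \<alpha> (sqrt (x * y)) \<le> robin_first_eig \<alpha> x + robin_first_eig \<alpha> y"
  using robin_first_eig_midpoint_log_convex_ordered[of \<alpha> x y]
    robin_first_eig_midpoint_log_convex_ordered[of \<alpha> y x] assms
  by (cases "x \<le> y") (simp_all add: mult.commute add.commute)

section \<open>Lower bound for the higher Robin eigenvalues of an interval\<close>

lemma homogeneous_system_nontrivial_solution:
  fixes g :: "nat \<Rightarrow> nat \<Rightarrow> real"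
  assumes "finite I" "m < card I"
  shows "\<exists>c. (\<exists>i\<in>I. c i \<noteq> 0) \<and> (\<forall>j<m. (\<Sum>i\<in>I. g j i * c i) = 0)"
  using assms
proof (induction m arbitrary: I g)
  case 0
  then obtain i0 where "i0 \<in> I" by fastforce
  then show ?case by (intro exI[of _ "\<lambda>i. if i = i0 then 1 else 0"]) auto
next
  case (Suc m)
  show ?case
  proof (cases "\<forall>i\<in>I. g m i = 0")
    case True
    then show ?thesis using Suc.IH[of I g] Suc.prems by (auto simp: less_Suc_eq)
  next
    case False
    then obtain i0 where i0: "i0 \<in> I" "g m i0 \<noteq> 0" by blast
    define I' where "I' = I - {i0}"
    have "finite I'" "m < card I'" unfolding I'_def using Suc.prems i0 by auto
    text \<open>Eliminate the unknown \<open>c i0\<close> by means of the last equation.\<close>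
    define g' where "g' j i = g j i - g j i0 * g m i / g m i0" for j i
    obtain c' where c': "\<exists>i\<in>I'. c' i \<noteq> 0" "\<forall>j<m. (\<Sum>i\<in>I'. g' j i * c' i) = 0"
      using Suc.IH[OF \<open>finite I'\<close> \<open>m < card I'\<close>, of g'] by blast
    define S where "S = (\<Sum>i\<in>I'. g m i * c' i)"
    define c where "c = c'(i0 := - S / g m i0)"
    have split: "(\<Sum>i\<in>I. g j i * c i) = g j i0 * c i0 + (\<Sum>i\<in>I'. g j i * c' i)" for j
    proof -
      have "(\<Sum>i\<in>I'. g j i * c i) = (\<Sum>i\<in>I'. g j i * c' i)"
        by (intro sum.cong) (auto simp: c_def I'_def)
      then show ?thesis using Suc.prems(1) i0(1) unfolding I'_def by (simp add: sum.remove)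
    qed
    have "(\<Sum>i\<in>I'. g j i * c' i) = g j i0 / g m i0 * S" if "j < m" for j
    proof -
      have "0 = (\<Sum>i\<in>I'. g' j i * c' i)" using c'(2) that by simp
      also have "\<dots> = (\<Sum>i\<in>I'. g j i * c' i) - g j i0 / g m i0 * S"
        unfolding g'_def S_def sum_distrib_left by (simp add: sum_subtractf algebra_simps)
      finally show ?thesis by simp
    qed
    then have "(\<Sum>i\<in>I. g j i * c i) = 0" if "j < Suc m" for j
      using that i0(2) unfolding split by (cases "j = m") (auto simp: c_def S_def)
    moreover have "\<exists>i\<in>I. c i \<noteq> 0" using c'(1) by (auto simp: c_def I'_def)
    ultimately show ?thesis by blast
  qed
qed

lemma integral_uniform_partition:
  fixes f :: "real \<Rightarrow> real"
  assumes "continuous_on UNIV f" "h \<ge> 0"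
  shows "integral {0..real n * h} f = (\<Sum>j<n. integral {real j * h..real (Suc j) * h} f)"
proof (induction n)
  case (Suc n)
  have "integral {0..real n * h} f + integral {real n * h..real (Suc n) * h} f
      = integral {0..real (Suc n) * h} f"
    using assms(2)
    by (intro Henstock_Kurzweil_Integration.integral_combine integrable_continuous_interval
        continuous_on_subset[OF assms(1)]) (auto simp: algebra_simps)
  then show ?case using Suc.IH by simp
qed simp

text \<open>Robin-Poincare on each of the \<open>n\<close> cells; the Robin terms at interior nodes vanish.\<close>

lemma robin_poincare_partition:
  assumes "\<alpha> > 0" "h > 0" "n \<ge> 1"
    and u: "\<And>x. (u has_real_derivative u' x) (at x)" "continuous_on UNIV u'"
    and nodes: "\<And>j. 0 < j \<Longrightarrow> j < n \<Longrightarrow> u (real j * h) = 0"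
  shows "robin_first_eig \<alpha> h * integral {0..real n * h} (\<lambda>x. (u x)\<^sup>2)
       \<le> integral {0..real n * h} (\<lambda>x. (u' x)\<^sup>2) + \<alpha> * ((u 0)\<^sup>2 + (u (real n * h))\<^sup>2)"
proof -
  define t where "t j = real j * h" for j
  obtain m where n: "n = Suc m" using assms(3) by (cases n) auto
  have cu: "continuous_on UNIV u" using u(1) by (intro continuous_at_imp_continuous_on ballI DERIV_isCont) blast
  have "robin_first_eig \<alpha> h * integral {t j..t (Suc j)} (\<lambda>x. (u x)\<^sup>2)
      \<le> integral {t j..t (Suc j)} (\<lambda>x. (u' x)\<^sup>2) + \<alpha> * ((u (t j))\<^sup>2 + (u (t (Suc j)))\<^sup>2)" for j
    using robin_poincare[OF assms(1), of "t j" "t (Suc j)" u u'] u continuous_on_subset[OF u(2)] \<open>h > 0\<close>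
    unfolding t_def by (auto simp: algebra_simps)
  then have "(\<Sum>j<n. robin_first_eig \<alpha> h * integral {t j..t (Suc j)} (\<lambda>x. (u x)\<^sup>2))
      \<le> (\<Sum>j<n. integral {t j..t (Suc j)} (\<lambda>x. (u' x)\<^sup>2) + \<alpha> * ((u (t j))\<^sup>2 + (u (t (Suc j)))\<^sup>2))"
    by (rule sum_mono)
  also have "\<dots> = (\<Sum>j<n. integral {t j..t (Suc j)} (\<lambda>x. (u' x)\<^sup>2))
         + \<alpha> * ((\<Sum>j<n. (u (t j))\<^sup>2) + (\<Sum>j<n. (u (t (Suc j)))\<^sup>2))"
    by (simp add: sum.distrib sum_distrib_left[symmetric])
  finally have cells: "(\<Sum>j<n. robin_first_eig \<alpha> h * integral {t j..t (Suc j)} (\<lambda>x. (u x)\<^sup>2))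
      \<le> (\<Sum>j<n. integral {t j..t (Suc j)} (\<lambda>x. (u' x)\<^sup>2))
         + \<alpha> * ((\<Sum>j<n. (u (t j))\<^sup>2) + (\<Sum>j<n. (u (t (Suc j)))\<^sup>2))" .
  moreover have "(\<Sum>j<n. (u (t j))\<^sup>2) = (u 0)\<^sup>2" "(\<Sum>j<n. (u (t (Suc j)))\<^sup>2) = (u (t n))\<^sup>2"
  proof -
    have "(\<Sum>j<m. (u (t (Suc j)))\<^sup>2) = 0"
      using nodes unfolding n t_def by (intro sum.neutral) (simp del: of_nat_Suc)
    then show "(\<Sum>j<n. (u (t j))\<^sup>2) = (u 0)\<^sup>2" "(\<Sum>j<n. (u (t (Suc j)))\<^sup>2) = (u (t n))\<^sup>2"
      unfolding n sum.lessThan_Suc_shift[of "\<lambda>j. (u (t j))\<^sup>2"] sum.lessThan_Suc[of "\<lambda>j. (u (t (Suc j)))\<^sup>2"]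
      by (simp_all add: t_def)
  qed
  moreover have "integral {0..t n} g = (\<Sum>j<n. integral {t j..t (Suc j)} g)"
    if "continuous_on UNIV g" for g :: "real \<Rightarrow> real"
    unfolding t_def using integral_uniform_partition[OF that] \<open>h > 0\<close> by simp
  ultimately show ?thesis
    using cu u(2) unfolding t_def[symmetric]
    by (simp add: sum_distrib_left[symmetric] continuous_intros)
qed

lemma C1_differentiable_on_UNIV_deriv:
  assumes "f C1_differentiable_on UNIV"
  shows "(f has_real_derivative deriv f x) (at x)" "continuous_on UNIV (deriv f)"
proof -
  obtain D where D: "\<And>x. (f has_real_derivative D x) (at x)" "continuous_on UNIV D"
    using assms unfolding C1_differentiable_on_def has_real_derivative_iff_has_vector_derivative by blast
  have "deriv f = D" using D(1) by (intro ext DERIV_imp_deriv)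
  then show "(f has_real_derivative deriv f x) (at x)" "continuous_on UNIV (deriv f)" using D by auto
qed

lemma lincomb_has_real_derivative:
  assumes "\<And>i. i < n \<Longrightarrow> (f i has_real_derivative D i x) (at x)"
  shows "(lincomb f c n has_real_derivative (\<Sum>i<n. c i * D i x)) (at x)"
  unfolding lincomb_def by (auto intro!: derivative_eq_intros assms simp: mult.commute)

lemma deriv_lincomb_C1:
  assumes "\<forall>i<n. f i C1_differentiable_on UNIV"
  shows "deriv (lincomb f c n) x = (\<Sum>i<n. c i * deriv (f i) x)"
  using assms C1_differentiable_on_UNIV_deriv(1)
  by (intro DERIV_imp_deriv lincomb_has_real_derivative) blast

lemma robin_form_int_quadratic_on:
  assumes "\<forall>i<n. f i C1_differentiable_on UNIV"
  shows "quadratic_on (robin_form_int \<alpha> b) n f"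
proof -
  have "continuous_on {0..b} (deriv (f i))" if "i < n" for i
    using assms that C1_differentiable_on_UNIV_deriv(2) continuous_on_subset by blast
  then have "quadratic_on (\<lambda>u. integral {0..b} (\<lambda>x. (deriv u x)\<^sup>2)) n f"
    by (intro quadratic_on_integral[where h = "\<lambda>i j x. deriv (f i) x * deriv (f j) x"])
       (auto intro!: integrable_continuous_interval continuous_intros
             simp: deriv_lincomb_C1[OF assms] square_sum_eq_quad_form)
  then show ?thesis unfolding robin_form_int_def[abs_def]
    by (intro quadratic_on_add quadratic_on_cmult quadratic_on_point_square)
qed

lemma mass_int_quadratic_on:
  assumes "\<forall>i<n. f i C1_differentiable_on UNIV"
  shows "quadratic_on (mass_int b) n f"
proof -
  have "continuous_on {0..b} (f i)" if "i < n" for i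
    using assms that C1_differentiable_on_UNIV_deriv(1)
    by (intro continuous_at_imp_continuous_on ballI DERIV_isCont) blast
  then show ?thesis unfolding mass_int_def[abs_def]
    by (intro quadratic_on_integral[where h = "\<lambda>i j x. f i x * f j x"])
       (auto intro!: integrable_continuous_interval continuous_intros
             simp: lincomb_def square_sum_eq_quad_form)
qed

text \<open>Any \<open>n\<close> test functions have a nontrivial combination vanishing at the \<open>n - 1\<close> interior
  nodes of the uniform partition of \<open>[0, b]\<close>.\<close>

lemma robin_rayleigh_interval_ge:
  assumes "\<alpha> > 0" "b > 0" "n \<ge> 1" "\<forall>i<n. f i C1_differentiable_on UNIV"
  shows "\<exists>c. (\<exists>i<n. c i \<noteq> 0) \<and>
           robin_first_eig \<alpha> (b / n) * mass_int b (lincomb f c n) \<le> robin_form_int \<alpha> b (lincomb f c n)"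
proof -
  define h where "h = b / n"
  have "h > 0" "real n * h = b" unfolding h_def using assms by auto
  obtain c where c: "\<exists>i\<in>{..<n}. c i \<noteq> 0" "\<forall>j<n - 1. (\<Sum>i\<in>{..<n}. f i (real (Suc j) * h) * c i) = 0"
    using homogeneous_system_nontrivial_solution[of "{..<n}" "n - 1" "\<lambda>j i. f i (real (Suc j) * h)"]
      assms(3) by auto
  define u where "u = lincomb f c n"
  have nodes: "u (real j * h) = 0" if "0 < j" "j < n" for j
    using c(2)[rule_format, of "j - 1"] that unfolding u_def lincomb_def by (simp add: mult.commute)
  have deriv: "(u has_real_derivative (\<Sum>i<n. c i * deriv (f i) x)) (at x)" for x
    unfolding u_def using assms(4) C1_differentiable_on_UNIV_deriv(1)
    by (intro lincomb_has_real_derivative) blast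
  have cont: "continuous_on UNIV (\<lambda>x. \<Sum>i<n. c i * deriv (f i) x)"
    using assms(4) C1_differentiable_on_UNIV_deriv(2) by (intro continuous_intros) blast
  from robin_poincare_partition[OF assms(1) \<open>h > 0\<close> assms(3) deriv cont nodes]
  have "robin_first_eig \<alpha> h * mass_int b u \<le> robin_form_int \<alpha> b u"
    unfolding \<open>real n * h = b\<close> robin_form_int_def mass_int_def u_def deriv_lincomb_C1[OF assms(4)] .
  then show ?thesis using c(1) unfolding u_def h_def by blast
qed

lemma monomials_admissible_interval:
  assumes "b > 0"
  shows "minmax_admissible (\<lambda>u. u C1_differentiable_on UNIV) (mass_int b) n (\<lambda>i x. x ^ i)"
  unfolding minmax_admissible_def
proof (intro conjI allI impI)
  fix i :: nat
  have "((\<lambda>x::real. x ^ i) has_vector_derivative real i * x ^ (i - 1)) (at x)" for x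
    using DERIV_pow[of i x] by (simp add: has_real_derivative_iff_has_vector_derivative)
  then show "(\<lambda>x. x ^ i) C1_differentiable_on UNIV"
    unfolding C1_differentiable_on_def by (auto intro!: exI[of _ "\<lambda>x. real i * x ^ (i - 1)"] continuous_intros)
next
  fix c :: "nat \<Rightarrow> real" assume "\<exists>i<n. c i \<noteq> 0"
  then obtain k where k: "k < n" "c k \<noteq> 0" by blast
  define p where "p x = (\<Sum>i<n. c i * x ^ i)" for x :: real
  have "finite {x. (\<Sum>i\<le>n - 1. c i * x ^ i) = 0}"
    using k by (intro polyfun_roots_finite[of c k]) auto
  moreover have "{..<n} = {..n - 1}" using k by auto
  ultimately have "finite {x. p x = 0}" unfolding p_def by simp
  then obtain z where "z \<in> {0..b}" "p z \<noteq> 0"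
    using infinite_Icc[OF assms] by (metis (mono_tags, lifting) finite_subset mem_Collect_eq subsetI)
  then have "integral {0..b} (\<lambda>x. (p x)\<^sup>2) > 0"
    using assms unfolding p_def
    by (intro integral_pos_if_pos_at[of 0 b _ z]) (auto intro!: continuous_intros)
  then show "mass_int b (lincomb (\<lambda>i x. x ^ i) c n) > 0"
    unfolding mass_int_def lincomb_def p_def .
qed

lemma robin_eig_interval_ge:
  assumes "\<alpha> > 0" "b > 0" "n \<ge> 1"
  shows "robin_first_eig \<alpha> (b / n) \<le> robin_eig_interval \<alpha> b n"
  unfolding robin_eig_interval_def
proof (rule minmax_level_ge)
  show "\<exists>f. minmax_admissible (\<lambda>u. u C1_differentiable_on UNIV) (mass_int b) n f"
    using monomials_admissible_interval[OF assms(2)] by blast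
qed (auto simp: minmax_admissible_def intro!: robin_form_int_quadratic_on mass_int_quadratic_on
      robin_rayleigh_interval_ge assms)

section \<open>The Robin eigenvalues of squares\<close>

definition has_partials :: "(real \<times> real \<Rightarrow> real) \<Rightarrow> (real \<times> real \<Rightarrow> real)
    \<Rightarrow> (real \<times> real \<Rightarrow> real) \<Rightarrow> bool" where
  "has_partials u P1 P2 \<longleftrightarrow> continuous_on UNIV P1 \<and> continuous_on UNIV P2 \<and>
     (\<forall>z. (u has_derivative (\<lambda>v. fst v * P1 z + snd v * P2 z)) (at z))"

lemma has_partialsD:
  assumes "has_partials u P1 P2"
  shows "(u has_derivative (\<lambda>v. fst v * P1 z + snd v * P2 z)) (at z)"
    "continuous_on UNIV P1" "continuous_on UNIV P2"
  using assms unfolding has_partials_def by blast+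

lemma C1_plane_has_partials:
  assumes "C1_plane u"
  shows "has_partials u (\<lambda>z. frechet_derivative u (at z) (1,0)) (\<lambda>z. frechet_derivative u (at z) (0,1))"
proof -
  obtain D :: "real \<times> real \<Rightarrow> (real \<times> real) \<Rightarrow>\<^sub>L real" where
    D: "\<And>x. (u has_derivative blinfun_apply (D x)) (at x)" "continuous_on UNIV D"
    using assms unfolding C1_plane_def by blast
  have fd: "frechet_derivative u (at z) = blinfun_apply (D z)" for z
    using frechet_derivative_at[OF D(1)] by simp
  have lin: "blinfun_apply (D z) v = fst v * D z (1,0) + snd v * D z (0,1)" for z v
  proof -
    have "v = fst v *\<^sub>R (1,0) + snd v *\<^sub>R (0,1)" by (cases v) simp
    then have "D z v = D z (fst v *\<^sub>R (1,0) + snd v *\<^sub>R (0,1))" by (rule arg_cong)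
    then show ?thesis by (simp only: blinfun.add_right blinfun.scaleR_right real_scaleR_def)
  qed
  have "(u has_derivative (\<lambda>v. fst v * D z (1,0) + snd v * D z (0,1))) (at z)" for z
    by (rule has_derivative_eq_rhs[OF D(1)[of z]]) (rule ext, rule lin)
  moreover have "continuous_on UNIV (\<lambda>z. D z (1,0))" "continuous_on UNIV (\<lambda>z. D z (0,1))"
    by (intro blinfun.continuous_on D(2) continuous_on_const)+
  ultimately show ?thesis unfolding has_partials_def fd by simp
qed

lemma has_partials_C1_plane:
  assumes "has_partials u P1 P2"
  shows "C1_plane u"
proof -
  have "bounded_linear (\<lambda>v::real \<times> real. fst v * a + snd v * b)" for a b :: real
  proof -
    have "bounded_linear (\<lambda>v::real \<times> real. fst v * a)" "bounded_linear (\<lambda>v::real \<times> real. snd v * b)"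
      using bounded_linear_compose[OF bounded_linear_mult_left bounded_linear_fst]
        bounded_linear_compose[OF bounded_linear_mult_left bounded_linear_snd] by (auto simp: o_def)
    then show ?thesis by (rule bounded_linear_add)
  qed
  define D where "D z = Blinfun (\<lambda>v::real \<times> real. fst v * P1 z + snd v * P2 z)" for z
  have Dapp: "blinfun_apply (D z) = (\<lambda>v. fst v * P1 z + snd v * P2 z)" for z
    unfolding D_def by (rule bounded_linear_Blinfun_apply) fact
  have "continuous_on UNIV D"
  proof (rule continuous_on_blinfun_componentwise)
    fix i :: "real \<times> real"
    show "continuous_on UNIV (\<lambda>z. blinfun_apply (D z) i)"
      unfolding Dapp using has_partialsD(2,3)[OF assms] by (intro continuous_intros)
  qed
  moreover have "\<forall>z. (u has_derivative blinfun_apply (D z)) (at z)"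
    unfolding Dapp using has_partialsD(1)[OF assms] by blast
  ultimately show ?thesis unfolding C1_plane_def by blast
qed

lemma grad_sq_eq_partials:
  assumes "has_partials u P1 P2"
  shows "grad_sq u z = (P1 z)\<^sup>2 + (P2 z)\<^sup>2"
proof -
  have "frechet_derivative u (at z) = (\<lambda>v. fst v * P1 z + snd v * P2 z)"
    using frechet_derivative_at[OF has_partialsD(1)[OF assms]] by (rule sym)
  then show ?thesis unfolding grad_sq_def by simp
qed

lemma has_partials_continuous_on:
  assumes "has_partials u P1 P2"
  shows "continuous_on S u"
  using has_partialsD(1)[OF assms]
  by (intro continuous_at_imp_continuous_on ballI has_derivative_continuous) blast

lemma has_partials_has_derivative_fst:
  assumes "has_partials u P1 P2"
  shows "((\<lambda>x. u (x, y)) has_real_derivative P1 (x, y)) (at x)"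
proof -
  have "((\<lambda>x::real. (x, y)) has_derivative (\<lambda>h. (h, 0))) (at x)" by (auto intro!: derivative_eq_intros)
  from has_derivative_compose[OF this has_partialsD(1)[OF assms]]
  have "((\<lambda>x. u (x, y)) has_derivative (\<lambda>h. h * P1 (x, y))) (at x)" by simp
  then show ?thesis
    unfolding has_field_derivative_def by (rule has_derivative_eq_rhs) (auto simp: mult.commute)
qed

lemma has_partials_has_derivative_snd:
  assumes "has_partials u P1 P2"
  shows "((\<lambda>y. u (x, y)) has_real_derivative P2 (x, y)) (at y)"
proof -
  have "((\<lambda>y::real. (x, y)) has_derivative (\<lambda>h. (0, h))) (at y)" by (auto intro!: derivative_eq_intros)
  from has_derivative_compose[OF this has_partialsD(1)[OF assms]]
  have "((\<lambda>y. u (x, y)) has_derivative (\<lambda>h. h * P2 (x, y))) (at y)" by simp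
  then show ?thesis
    unfolding has_field_derivative_def by (rule has_derivative_eq_rhs) (auto simp: mult.commute)
qed

lemma has_partials_lincomb:
  assumes "\<And>i. i < n \<Longrightarrow> has_partials (f i) (P1 i) (P2 i)"
  shows "has_partials (lincomb f c n) (\<lambda>z. \<Sum>i<n. c i * P1 i z) (\<lambda>z. \<Sum>i<n. c i * P2 i z)"
  unfolding has_partials_def
proof (intro conjI allI)
  show "continuous_on UNIV (\<lambda>z. \<Sum>i<n. c i * P1 i z)" "continuous_on UNIV (\<lambda>z. \<Sum>i<n. c i * P2 i z)"
    using has_partialsD(2,3)[OF assms] by (auto intro!: continuous_intros)
  fix z
  have "((\<lambda>x. \<Sum>i<n. c i * f i x) has_derivative (\<lambda>v. \<Sum>i<n. c i * (fst v * P1 i z + snd v * P2 i z))) (at z)"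
    using has_partialsD(1)[OF assms] by (intro has_derivative_sum has_derivative_mult_right) auto
  then show "(lincomb f c n has_derivative
      (\<lambda>v. fst v * (\<Sum>i<n. c i * P1 i z) + snd v * (\<Sum>i<n. c i * P2 i z))) (at z)"
    unfolding lincomb_def
    by (rule has_derivative_eq_rhs) (auto simp: sum_distrib_left sum.distrib algebra_simps)
qed

lemma continuous_on_slices:
  fixes g :: "real \<times> real \<Rightarrow> real"
  assumes "continuous_on UNIV g"
  shows "continuous_on UNIV (\<lambda>x. g (x, c))" "continuous_on UNIV (\<lambda>y. g (c, y))"
  by (rule continuous_on_compose2[OF assms], auto intro!: continuous_intros)+

lemma integral_box_iterated:
  fixes g :: "real \<times> real \<Rightarrow> real"
  assumes "continuous_on UNIV g"
  shows "integral (cbox (a,c) (b,d)) g = integral {a..b} (\<lambda>x. integral {c..d} (\<lambda>y. g (x,y)))"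
    "integral (cbox (a,c) (b,d)) g = integral {c..d} (\<lambda>y. integral {a..b} (\<lambda>x. g (x,y)))"
proof -
  show *: "integral (cbox (a,c) (b,d)) g = integral {a..b} (\<lambda>x. integral {c..d} (\<lambda>y. g (x,y)))"
    using integral_prod_continuous[of a c b d g] continuous_on_subset[OF assms] by (simp add: box_real)
  have "(\<lambda>(x, y). g (x, y)) = g" by auto
  then show "integral (cbox (a,c) (b,d)) g = integral {c..d} (\<lambda>y. integral {a..b} (\<lambda>x. g (x,y)))"
    using integral_swap_continuous[of a c b d "\<lambda>x y. g (x,y)"] continuous_on_subset[OF assms]
    unfolding * by (simp add: box_real)
qed

lemma continuous_on_integral_slices:
  fixes g :: "real \<times> real \<Rightarrow> real"
  assumes "continuous_on UNIV g"
  shows "continuous_on UNIV (\<lambda>x. integral {c..d} (\<lambda>y. g (x,y)))"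
    "continuous_on UNIV (\<lambda>y. integral {c..d} (\<lambda>x. g (x,y)))"
proof -
  have "(\<lambda>(x, y). g (x, y)) = g" by auto
  then have "continuous_on UNIV (\<lambda>x. integral (cbox c d) (\<lambda>y. g (x,y)))"
    using continuous_on_subset[OF assms] by (intro integral_continuous_on_param) auto
  then show "continuous_on UNIV (\<lambda>x. integral {c..d} (\<lambda>y. g (x,y)))" by (simp add: box_real)
  have "continuous_on UNIV (\<lambda>z. g (snd z, fst z))"
    by (rule continuous_on_compose2[OF assms]) (auto intro!: continuous_intros)
  moreover have "(\<lambda>(y, x). g (x, y)) = (\<lambda>z. g (snd z, fst z))" by auto
  ultimately have "continuous_on UNIV (\<lambda>y. integral (cbox c d) (\<lambda>x. g (x,y)))"
    using continuous_on_subset by (intro integral_continuous_on_param) fastforce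
  then show "continuous_on UNIV (\<lambda>y. integral {c..d} (\<lambda>x. g (x,y)))" by (simp add: box_real)
qed

lemma integral_shift_Icc: "integral {0..s} (\<lambda>t. f (p + t)) = integral {p..p+s} (f :: real \<Rightarrow> real)"
  using integral_shift_Icc_real[of 0 s f p] by (simp add: o_def add.commute)

lemma integral_mono_continuous:
  fixes f g :: "real \<Rightarrow> real"
  assumes "continuous_on UNIV f" "continuous_on UNIV g" "\<And>x. x \<in> {a..b} \<Longrightarrow> f x \<le> g x"
  shows "integral {a..b} f \<le> integral {a..b} g"
  using assms by (intro integral_le integrable_continuous_interval continuous_on_subset[OF assms(1)]
      continuous_on_subset[OF assms(2)]) auto

lemma integral_add_cmult_add:
  fixes A B C :: "real \<Rightarrow> real"
  assumes "A integrable_on S" "B integrable_on S" "C integrable_on S"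
  shows "integral S (\<lambda>x. A x + a * (B x + C x)) = integral S A + a * (integral S B + integral S C)"
proof -
  have "integral S (\<lambda>x. A x + a * (B x + C x)) = integral S A + integral S (\<lambda>x. a * (B x + C x))"
    using assms integrable_cmul[OF integrable_add[OF assms(2,3)], of a] by (intro integral_add) auto
  also have "integral S (\<lambda>x. a * (B x + C x)) = a * integral S (\<lambda>x. B x + C x)" by simp
  also have "integral S (\<lambda>x. B x + C x) = integral S B + integral S C" by (rule integral_add[OF assms(2,3)])
  finally show ?thesis .
qed

text \<open>Robin-Poincare in \<open>y\<close> on every vertical segment, integrated over \<open>x\<close>.\<close>

lemma robin_poincare_square_vertical:
  assumes "\<alpha> > 0" "s > 0" "has_partials u P1 P2"
  shows "robin_first_eig \<alpha> s * integral (cbox (p,0) (p+s,s)) (\<lambda>z. (u z)\<^sup>2)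
       \<le> integral (cbox (p,0) (p+s,s)) (\<lambda>z. (P2 z)\<^sup>2)
         + \<alpha> * (integral {0..s} (\<lambda>t. (u (p+t,0))\<^sup>2) + integral {0..s} (\<lambda>t. (u (p+t,s))\<^sup>2))"
proof -
  have cu: "continuous_on UNIV u" "continuous_on UNIV (\<lambda>z. (u z)\<^sup>2)"
    using has_partials_continuous_on[OF assms(3)] by (auto intro: continuous_intros)
  have cP: "continuous_on UNIV (\<lambda>z. (P2 z)\<^sup>2)"
    using has_partialsD(3)[OF assms(3)] by (intro continuous_intros)
  have pointwise: "robin_first_eig \<alpha> s * integral {0..s} (\<lambda>y. (u (x,y))\<^sup>2)
      \<le> integral {0..s} (\<lambda>y. (P2 (x,y))\<^sup>2) + \<alpha> * ((u (x,0))\<^sup>2 + (u (x,s))\<^sup>2)" for x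
    using robin_poincare[OF assms(1,2) has_partials_has_derivative_snd[OF assms(3)]
        continuous_on_subset[OF continuous_on_slices(2)[OF has_partialsD(3)[OF assms(3)]]]]
    by simp
  have "robin_first_eig \<alpha> s * integral (cbox (p,0) (p+s,s)) (\<lambda>z. (u z)\<^sup>2)
      = integral {p..p+s} (\<lambda>x. robin_first_eig \<alpha> s * integral {0..s} (\<lambda>y. (u (x,y))\<^sup>2))"
    unfolding integral_box_iterated(1)[OF cu(2)] by simp
  also have "\<dots> \<le> integral {p..p+s}
      (\<lambda>x. integral {0..s} (\<lambda>y. (P2 (x,y))\<^sup>2) + \<alpha> * ((u (x,0))\<^sup>2 + (u (x,s))\<^sup>2))"
    using cu cP pointwise by (intro integral_mono_continuous)
      (auto intro!: continuous_intros continuous_on_integral_slices continuous_on_slices)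
  also have "\<dots> = integral {p..p+s} (\<lambda>x. integral {0..s} (\<lambda>y. (P2 (x,y))\<^sup>2))
      + \<alpha> * (integral {p..p+s} (\<lambda>x. (u (x,0))\<^sup>2) + integral {p..p+s} (\<lambda>x. (u (x,s))\<^sup>2))"
    using cu cP by (intro integral_add_cmult_add integrable_continuous_interval continuous_intros
        continuous_on_subset[OF continuous_on_integral_slices(1)] continuous_on_subset[OF continuous_on_slices(1)])
      (use has_partialsD[OF assms(3)] in auto)
  also have "\<dots> = integral (cbox (p,0) (p+s,s)) (\<lambda>z. (P2 z)\<^sup>2)
      + \<alpha> * (integral {0..s} (\<lambda>t. (u (p+t,0))\<^sup>2) + integral {0..s} (\<lambda>t. (u (p+t,s))\<^sup>2))"
    unfolding integral_box_iterated(1)[OF cP] integral_shift_Icc[of s "\<lambda>x. (u (x,_))\<^sup>2"] ..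
  finally show ?thesis .
qed

lemma robin_poincare_square_horizontal:
  assumes "\<alpha> > 0" "s > 0" "has_partials u P1 P2"
  shows "robin_first_eig \<alpha> s * integral (cbox (p,0) (p+s,s)) (\<lambda>z. (u z)\<^sup>2)
       \<le> integral (cbox (p,0) (p+s,s)) (\<lambda>z. (P1 z)\<^sup>2)
         + \<alpha> * (integral {0..s} (\<lambda>t. (u (p,t))\<^sup>2) + integral {0..s} (\<lambda>t. (u (p+s,t))\<^sup>2))"
proof -
  have cu: "continuous_on UNIV u" "continuous_on UNIV (\<lambda>z. (u z)\<^sup>2)"
    using has_partials_continuous_on[OF assms(3)] by (auto intro: continuous_intros)
  have cP: "continuous_on UNIV (\<lambda>z. (P1 z)\<^sup>2)"
    using has_partialsD(2)[OF assms(3)] by (intro continuous_intros)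
  have pointwise: "robin_first_eig \<alpha> s * integral {p..p+s} (\<lambda>x. (u (x,y))\<^sup>2)
      \<le> integral {p..p+s} (\<lambda>x. (P1 (x,y))\<^sup>2) + \<alpha> * ((u (p,y))\<^sup>2 + (u (p+s,y))\<^sup>2)" for y
    using robin_poincare[of \<alpha> p "p + s", OF assms(1) _ has_partials_has_derivative_fst[OF assms(3)]
        continuous_on_subset[OF continuous_on_slices(1)[OF has_partialsD(2)[OF assms(3)]]]] assms(2)
    by simp
  have "robin_first_eig \<alpha> s * integral (cbox (p,0) (p+s,s)) (\<lambda>z. (u z)\<^sup>2)
      = integral {0..s} (\<lambda>y. robin_first_eig \<alpha> s * integral {p..p+s} (\<lambda>x. (u (x,y))\<^sup>2))"
    unfolding integral_box_iterated(2)[OF cu(2)] by simp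
  also have "\<dots> \<le> integral {0..s}
      (\<lambda>y. integral {p..p+s} (\<lambda>x. (P1 (x,y))\<^sup>2) + \<alpha> * ((u (p,y))\<^sup>2 + (u (p+s,y))\<^sup>2))"
    using cu cP pointwise by (intro integral_mono_continuous)
      (auto intro!: continuous_intros continuous_on_integral_slices continuous_on_slices)
  also have "\<dots> = integral {0..s} (\<lambda>y. integral {p..p+s} (\<lambda>x. (P1 (x,y))\<^sup>2))
      + \<alpha> * (integral {0..s} (\<lambda>y. (u (p,y))\<^sup>2) + integral {0..s} (\<lambda>y. (u (p+s,y))\<^sup>2))"
    using cu cP by (intro integral_add_cmult_add integrable_continuous_interval continuous_intros
        continuous_on_subset[OF continuous_on_integral_slices(2)] continuous_on_subset[OF continuous_on_slices(2)])
      (use has_partialsD[OF assms(3)] in auto)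
  also have "\<dots> = integral (cbox (p,0) (p+s,s)) (\<lambda>z. (P1 z)\<^sup>2)
      + \<alpha> * (integral {0..s} (\<lambda>t. (u (p,t))\<^sup>2) + integral {0..s} (\<lambda>t. (u (p+s,t))\<^sup>2))"
    unfolding integral_box_iterated(2)[OF cP] ..
  finally show ?thesis .
qed

lemma robin_form_sq_ge:
  assumes "\<alpha> > 0" "s > 0" "has_partials u P1 P2"
  shows "2 * robin_first_eig \<alpha> s * mass_sq p s u \<le> robin_form_sq \<alpha> p s u"
proof -
  define B where "B = cbox (p,0) (p+s,s)"
  have "continuous_on B (\<lambda>z. (P1 z)\<^sup>2)" "continuous_on B (\<lambda>z. (P2 z)\<^sup>2)"
    using has_partialsD(2,3)[OF assms(3)] by (auto intro!: continuous_intros intro: continuous_on_subset)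
  then have "integral B (grad_sq u) = integral B (\<lambda>z. (P1 z)\<^sup>2) + integral B (\<lambda>z. (P2 z)\<^sup>2)"
    unfolding grad_sq_eq_partials[OF assms(3)] B_def by (intro integral_add integrable_continuous)
  then show ?thesis
    using robin_poincare_square_vertical[OF assms, of p] robin_poincare_square_horizontal[OF assms, of p]
    unfolding robin_form_sq_def mass_sq_def B_def[symmetric] distrib_left mult.assoc by linarith
qed

definition has_C1_derivative :: "(real \<Rightarrow> real) \<Rightarrow> (real \<Rightarrow> real) \<Rightarrow> bool" where
  "has_C1_derivative f f' \<longleftrightarrow> (\<forall>x. (f has_real_derivative f' x) (at x)) \<and> continuous_on UNIV f'"

lemma has_C1_derivative_glue:
  assumes f: "has_C1_derivative f f'" and g: "has_C1_derivative g g'" and "f a = g a" "f' a = g' a"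
  shows "has_C1_derivative (\<lambda>x. if x \<le> a then f x else g x) (\<lambda>x. if x \<le> a then f' x else g' x)"
  unfolding has_C1_derivative_def
proof (intro allI conjI)
  fix x
  have "closure {..a} \<inter> closure {a<..} = {a}" by auto
  then have "((\<lambda>x. if x \<in> {..a} then f x else g x) has_derivative
      (if x \<in> {..a} then (*) (f' x) else (*) (g' x))) (at x within ({..a} \<union> {a<..}))"
    using f g assms(3,4) unfolding has_C1_derivative_def has_field_derivative_def
    by (intro has_derivative_If_within_closures) (auto intro: has_derivative_at_withinI)
  moreover have "{..a} \<union> {a<..} = (UNIV :: real set)" by auto
  ultimately show "((\<lambda>x. if x \<le> a then f x else g x) has_real_derivative (if x \<le> a then f' x else g' x)) (at x)"
    unfolding has_field_derivative_def by (simp add: if_distrib[of "(*)"] cong: if_cong)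
next
  show "continuous_on UNIV (\<lambda>x. if x \<le> a then f' x else g' x)"
    using f g assms(4) unfolding has_C1_derivative_def
    by (intro continuous_on_cases_le[where h = "\<lambda>x. x", of UNIV a f' g', simplified])
       (auto intro: continuous_on_subset)
qed

lemma has_C1_derivative_reflect:
  assumes "has_C1_derivative f f'"
  shows "has_C1_derivative (\<lambda>x. f (c - x)) (\<lambda>x. - f' (c - x))"
  unfolding has_C1_derivative_def
proof (intro allI conjI)
  fix x
  have "(f has_real_derivative f' (c - x)) (at (c - x))" using assms unfolding has_C1_derivative_def by blast
  moreover have "((\<lambda>x. c - x) has_real_derivative - 1) (at x)" by (auto intro!: derivative_eq_intros)
  ultimately show "((\<lambda>x. f (c - x)) has_real_derivative - f' (c - x)) (at x)"
    using DERIV_chain2 by fastforce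
  have "continuous_on UNIV f'" using assms unfolding has_C1_derivative_def by blast
  then have "continuous_on UNIV (\<lambda>x. f' (c - x))"
    by (rule continuous_on_compose2) (auto intro: continuous_intros)
  then show "continuous_on UNIV (\<lambda>x. - f' (c - x))" by (rule continuous_on_minus)
qed

lemma has_C1_derivative_robin_mode: "has_C1_derivative (robin_mode \<alpha> l) (robin_mode_deriv \<alpha> l)"
  unfolding has_C1_derivative_def using robin_mode_has_derivative continuous_on_robin_mode_deriv by blast

text \<open>The cubic on \<open>[0, h]\<close> with value \<open>v\<close> and slope \<open>d\<close> at \<open>0\<close>
  and value and slope \<open>0\<close> at \<open>h\<close>.\<close>

definition hermite_to_zero :: "real \<Rightarrow> real \<Rightarrow> real \<Rightarrow> real \<Rightarrow> real" where
  "hermite_to_zero v d h t = v + d * t - (3 * v + 2 * d * h) * (t / h)\<^sup>2 + (2 * v + d * h) * (t / h) ^ 3"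

definition hermite_to_zero_deriv :: "real \<Rightarrow> real \<Rightarrow> real \<Rightarrow> real \<Rightarrow> real" where
  "hermite_to_zero_deriv v d h t = d - 2 * (3 * v + 2 * d * h) * t / h\<^sup>2 + 3 * (2 * v + d * h) * t\<^sup>2 / h ^ 3"

lemma hermite_to_zero_ends:
  assumes "h \<noteq> 0"
  shows "hermite_to_zero v d h 0 = v" "hermite_to_zero_deriv v d h 0 = d"
    "hermite_to_zero v d h h = 0" "hermite_to_zero_deriv v d h h = 0"
  using assms unfolding hermite_to_zero_def hermite_to_zero_deriv_def
  by (simp_all add: field_simps power2_eq_square power3_eq_cube)

lemma has_C1_derivative_hermite_to_zero:
  assumes "h \<noteq> 0"
  shows "has_C1_derivative (\<lambda>x. hermite_to_zero v d h (x - a)) (\<lambda>x. hermite_to_zero_deriv v d h (x - a))"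
  unfolding has_C1_derivative_def hermite_to_zero_def hermite_to_zero_deriv_def using assms
  by (auto intro!: derivative_eq_intros continuous_intros simp: field_simps power2_eq_square power3_eq_cube)

text \<open>A \<open>C\<^sup>1\<close> extension of the Robin mode on \<open>[0, s]\<close> supported in \<open>[-s, 2 s]\<close>: the cubic
  tail on \<open>[s, 2 s]\<close> is reflected about the centre \<open>s/2\<close>, where the mode has slope \<open>0\<close>.\<close>

definition half_bump :: "real \<Rightarrow> real \<Rightarrow> real \<Rightarrow> real" where
  "half_bump \<alpha> s x =
     (if x \<le> s then robin_mode \<alpha> s x
      else if x \<le> 2 * s then hermite_to_zero (robin_mode \<alpha> s s) (robin_mode_deriv \<alpha> s s) s (x - s) else 0)"

definition half_bump_deriv :: "real \<Rightarrow> real \<Rightarrow> real \<Rightarrow> real" where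
  "half_bump_deriv \<alpha> s x =
     (if x \<le> s then robin_mode_deriv \<alpha> s x
      else if x \<le> 2 * s then hermite_to_zero_deriv (robin_mode \<alpha> s s) (robin_mode_deriv \<alpha> s s) s (x - s)
      else 0)"

definition bump :: "real \<Rightarrow> real \<Rightarrow> real \<Rightarrow> real" where
  "bump \<alpha> s x = (if x \<le> s / 2 then half_bump \<alpha> s (s - x) else half_bump \<alpha> s x)"

definition bump_deriv :: "real \<Rightarrow> real \<Rightarrow> real \<Rightarrow> real" where
  "bump_deriv \<alpha> s x = (if x \<le> s / 2 then - half_bump_deriv \<alpha> s (s - x) else half_bump_deriv \<alpha> s x)"

lemma has_C1_derivative_half_bump:
  assumes "s > 0"
  shows "has_C1_derivative (half_bump \<alpha> s) (half_bump_deriv \<alpha> s)"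
proof -
  let ?v = "robin_mode \<alpha> s s" and ?d = "robin_mode_deriv \<alpha> s s"
  have "has_C1_derivative (\<lambda>x. 0) (\<lambda>x. 0)" by (simp add: has_C1_derivative_def)
  then have "has_C1_derivative (\<lambda>x. if x \<le> 2 * s then hermite_to_zero ?v ?d s (x - s) else 0)
      (\<lambda>x. if x \<le> 2 * s then hermite_to_zero_deriv ?v ?d s (x - s) else 0)"
    using assms by (intro has_C1_derivative_glue has_C1_derivative_hermite_to_zero) (simp_all add: hermite_to_zero_ends)
  then show ?thesis
    unfolding half_bump_def[abs_def] half_bump_deriv_def[abs_def] using assms
    by (intro has_C1_derivative_glue[OF has_C1_derivative_robin_mode]) (simp_all add: hermite_to_zero_ends)
qed

lemma has_C1_derivative_bump:
  assumes "s > 0"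
  shows "has_C1_derivative (bump \<alpha> s) (bump_deriv \<alpha> s)"
proof -
  note half = has_C1_derivative_half_bump[OF assms]
  have "half_bump_deriv \<alpha> s (s / 2) = 0"
    using assms robin_mode_deriv_centre[of \<alpha> s] by (simp add: half_bump_deriv_def)
  then show ?thesis
    unfolding bump_def[abs_def] bump_deriv_def[abs_def]
    by (intro has_C1_derivative_glue[OF has_C1_derivative_reflect[OF half] half]) simp_all
qed

lemma bump_on_cell:
  assumes "0 \<le> x" "x \<le> s"
  shows "bump \<alpha> s x = robin_mode \<alpha> s x" "bump_deriv \<alpha> s x = robin_mode_deriv \<alpha> s x"
proof -
  have "s - x \<le> s" "x \<le> s" using assms by auto
  then show "bump \<alpha> s x = robin_mode \<alpha> s x" "bump_deriv \<alpha> s x = robin_mode_deriv \<alpha> s x"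
    using robin_mode_symmetric[of \<alpha> s x]
    unfolding bump_def bump_deriv_def half_bump_def half_bump_deriv_def by simp_all
qed

lemma bump_outside:
  assumes "s > 0" "x \<ge> 2 * s \<or> x \<le> - s"
  shows "bump \<alpha> s x = 0" "bump_deriv \<alpha> s x = 0"
proof -
  have "half_bump \<alpha> s y = 0 \<and> half_bump_deriv \<alpha> s y = 0" if "y \<ge> 2 * s" for y
  proof (cases "y = 2 * s")
    case True
    then show ?thesis using assms(1) hermite_to_zero_ends(3,4)[of s] by (simp add: half_bump_def half_bump_deriv_def)
  qed (use that assms(1) in \<open>simp add: half_bump_def half_bump_deriv_def\<close>)
  moreover have "s / 2 < x \<and> 2 * s \<le> x \<or> x \<le> s / 2 \<and> 2 * s \<le> s - x" using assms by auto
  ultimately show "bump \<alpha> s x = 0" "bump_deriv \<alpha> s x = 0" unfolding bump_def bump_deriv_def by fastforce+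
qed

text \<open>The \<open>i\<close>-th test function is the product mode on the \<open>i\<close>-th square, extended by a bump in
  \<open>x\<close> that vanishes on all other squares.\<close>

definition square_mode :: "real \<Rightarrow> real \<Rightarrow> nat \<Rightarrow> real \<times> real \<Rightarrow> real" where
  "square_mode \<alpha> s i z = bump \<alpha> s (fst z - 2 * real i * s) * robin_mode \<alpha> s (snd z)"

definition square_mode_dx :: "real \<Rightarrow> real \<Rightarrow> nat \<Rightarrow> real \<times> real \<Rightarrow> real" where
  "square_mode_dx \<alpha> s i z = bump_deriv \<alpha> s (fst z - 2 * real i * s) * robin_mode \<alpha> s (snd z)"

definition square_mode_dy :: "real \<Rightarrow> real \<Rightarrow> nat \<Rightarrow> real \<times> real \<Rightarrow> real" where
  "square_mode_dy \<alpha> s i z = bump \<alpha> s (fst z - 2 * real i * s) * robin_mode_deriv \<alpha> s (snd z)"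

lemma square_mode_has_partials:
  assumes "s > 0"
  shows "has_partials (square_mode \<alpha> s i) (square_mode_dx \<alpha> s i) (square_mode_dy \<alpha> s i)"
proof -
  note bump = has_C1_derivative_bump[OF assms, of \<alpha>, unfolded has_C1_derivative_def]
  have shift: "continuous_on UNIV (\<lambda>z::real \<times> real. g (fst z - 2 * real i * s))"
    if "continuous_on UNIV g" for g :: "real \<Rightarrow> real"
    using that by (rule continuous_on_compose2) (auto intro!: continuous_intros)
  have snd: "continuous_on UNIV (\<lambda>z::real \<times> real. g (snd z))" if "continuous_on UNIV g" for g :: "real \<Rightarrow> real"
    using that by (rule continuous_on_compose2) (auto intro!: continuous_intros)
  have "continuous_on UNIV (bump \<alpha> s)"
    using bump by (intro continuous_at_imp_continuous_on ballI DERIV_isCont) blast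
  then have "continuous_on UNIV (square_mode_dx \<alpha> s i)" "continuous_on UNIV (square_mode_dy \<alpha> s i)"
    unfolding square_mode_dx_def square_mode_dy_def using bump
    by (auto intro!: continuous_intros shift snd continuous_on_robin_mode continuous_on_robin_mode_deriv)
  moreover have "(square_mode \<alpha> s i has_derivative
      (\<lambda>v. fst v * square_mode_dx \<alpha> s i z + snd v * square_mode_dy \<alpha> s i z)) (at z)" for z
  proof -
    have "((\<lambda>z. fst z - 2 * real i * s) has_derivative fst) (at z)" "(snd has_derivative snd) (at z)"
      by (auto intro!: derivative_eq_intros)
    moreover have "(bump \<alpha> s has_derivative (*) (bump_deriv \<alpha> s (fst z - 2 * real i * s)))
        (at (fst z - 2 * real i * s))" "(robin_mode \<alpha> s has_derivative (*) (robin_mode_deriv \<alpha> s (snd z))) (at (snd z))"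
      using bump robin_mode_has_derivative unfolding has_field_derivative_def by blast+
    ultimately have "((\<lambda>z. bump \<alpha> s (fst z - 2 * real i * s)) has_derivative
        (\<lambda>v. bump_deriv \<alpha> s (fst z - 2 * real i * s) * fst v)) (at z)"
      "((\<lambda>z. robin_mode \<alpha> s (snd z)) has_derivative (\<lambda>v. robin_mode_deriv \<alpha> s (snd z) * snd v)) (at z)"
      by (auto dest: has_derivative_compose)
    then show ?thesis
      unfolding square_mode_def[abs_def] square_mode_dx_def square_mode_dy_def
      by (rule has_derivative_eq_rhs[OF has_derivative_mult]) (auto simp: algebra_simps)
  qed
  ultimately show ?thesis unfolding has_partials_def by blast
qed

lemma square_mode_vanishes:
  assumes "s > 0" "i \<noteq> l" "2 * real l * s \<le> x" "x \<le> 2 * real l * s + s"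
  shows "square_mode \<alpha> s i (x, y) = 0" "square_mode_dx \<alpha> s i (x, y) = 0" "square_mode_dy \<alpha> s i (x, y) = 0"
proof -
  have "real l - real i \<ge> 1 \<or> real i - real l \<ge> 1" using assms(2) by linarith
  then have "2 * s \<le> 2 * (real l - real i) * s \<or> 2 * s \<le> 2 * (real i - real l) * s"
    using assms(1) by auto
  then have "x - 2 * real i * s \<ge> 2 * s \<or> x - 2 * real i * s \<le> - s"
    using assms(3,4) by (auto simp: algebra_simps)
  then show "square_mode \<alpha> s i (x, y) = 0" "square_mode_dx \<alpha> s i (x, y) = 0" "square_mode_dy \<alpha> s i (x, y) = 0"
    unfolding square_mode_def square_mode_dx_def square_mode_dy_def using bump_outside[OF assms(1)] by auto
qed

lemma sum_lessThan_eq_single: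
  fixes l m :: nat
  assumes "l < m" "\<And>i. i < m \<Longrightarrow> i \<noteq> l \<Longrightarrow> f i = 0"
  shows "(\<Sum>i<m. f i) = (f l :: real)"
proof -
  have "(\<Sum>i<m. f i) = f l + (\<Sum>i\<in>{..<m} - {l}. f i)" using assms(1) by (intro sum.remove) auto
  moreover have "(\<Sum>i\<in>{..<m} - {l}. f i) = 0" using assms by (intro sum.neutral) auto
  ultimately show ?thesis by simp
qed

lemma square_mode_lincomb_on_square:
  assumes "s > 0" "l < m" "p = 2 * real l * s" "p \<le> x" "x \<le> p + s"
  shows "lincomb (square_mode \<alpha> s) c m (x, y) = c l * (robin_mode \<alpha> s (x - p) * robin_mode \<alpha> s y)"
    "(\<Sum>i<m. c i * square_mode_dx \<alpha> s i (x, y)) = c l * (robin_mode_deriv \<alpha> s (x - p) * robin_mode \<alpha> s y)"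
    "(\<Sum>i<m. c i * square_mode_dy \<alpha> s i (x, y)) = c l * (robin_mode \<alpha> s (x - p) * robin_mode_deriv \<alpha> s y)"
proof -
  have "0 \<le> x - p" "x - p \<le> s" using assms by auto
  note on_cell = bump_on_cell[OF this, of \<alpha>]
  have zero: "square_mode \<alpha> s i (x, y) = 0" "square_mode_dx \<alpha> s i (x, y) = 0"
    "square_mode_dy \<alpha> s i (x, y) = 0" if "i \<noteq> l" for i
    using square_mode_vanishes[OF assms(1) that] assms(3-5) by auto
  have "lincomb (square_mode \<alpha> s) c m (x, y) = c l * square_mode \<alpha> s l (x, y)"
    "(\<Sum>i<m. c i * square_mode_dx \<alpha> s i (x, y)) = c l * square_mode_dx \<alpha> s l (x, y)"
    "(\<Sum>i<m. c i * square_mode_dy \<alpha> s i (x, y)) = c l * square_mode_dy \<alpha> s l (x, y)"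
    unfolding lincomb_def using zero by (auto intro!: sum_lessThan_eq_single[OF assms(2)])
  then show "lincomb (square_mode \<alpha> s) c m (x, y) = c l * (robin_mode \<alpha> s (x - p) * robin_mode \<alpha> s y)"
    "(\<Sum>i<m. c i * square_mode_dx \<alpha> s i (x, y)) = c l * (robin_mode_deriv \<alpha> s (x - p) * robin_mode \<alpha> s y)"
    "(\<Sum>i<m. c i * square_mode_dy \<alpha> s i (x, y)) = c l * (robin_mode \<alpha> s (x - p) * robin_mode_deriv \<alpha> s y)"
    using on_cell unfolding square_mode_def square_mode_dx_def square_mode_dy_def assms(3)[symmetric]
    by simp_all
qed

lemma integral_square_tensor:
  fixes g h :: "real \<Rightarrow> real"
  assumes "continuous_on UNIV g" "continuous_on UNIV h"
  shows "(\<lambda>z. (g (fst z - p) * h (snd z))\<^sup>2) integrable_on cbox (p,0) (p+s,s)"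
    "integral (cbox (p,0) (p+s,s)) (\<lambda>z. (g (fst z - p) * h (snd z))\<^sup>2)
       = integral {0..s} (\<lambda>t. (g t)\<^sup>2) * integral {0..s} (\<lambda>t. (h t)\<^sup>2)"
proof -
  have "continuous_on UNIV (\<lambda>z::real \<times> real. g (fst z - p))" "continuous_on UNIV (\<lambda>z::real \<times> real. h (snd z))"
    by (rule continuous_on_compose2[OF assms(1)] continuous_on_compose2[OF assms(2)];
        auto intro!: continuous_intros)+
  then have cont: "continuous_on UNIV (\<lambda>z::real \<times> real. (g (fst z - p) * h (snd z))\<^sup>2)"
    by (intro continuous_intros)
  then show "(\<lambda>z. (g (fst z - p) * h (snd z))\<^sup>2) integrable_on cbox (p,0) (p+s,s)"
    by (rule integrable_continuous[OF continuous_on_subset[OF _ subset_UNIV]])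
  have "integral (cbox (p,0) (p+s,s)) (\<lambda>z. (g (fst z - p) * h (snd z))\<^sup>2)
      = integral {p..p+s} (\<lambda>x. (g (x - p))\<^sup>2 * integral {0..s} (\<lambda>t. (h t)\<^sup>2))"
    using cont by (simp add: integral_box_iterated(1) power_mult_distrib)
  also have "\<dots> = integral {0..s} (\<lambda>t. (g t)\<^sup>2) * integral {0..s} (\<lambda>t. (h t)\<^sup>2)"
    using integral_shift_Icc[of s "\<lambda>x. (g (x - p))\<^sup>2" p] by simp
  finally show "integral (cbox (p,0) (p+s,s)) (\<lambda>z. (g (fst z - p) * h (snd z))\<^sup>2)
       = integral {0..s} (\<lambda>t. (g t)\<^sup>2) * integral {0..s} (\<lambda>t. (h t)\<^sup>2)" .
qed

definition is_product_mode_on_square :: "real \<Rightarrow> real \<Rightarrow> real \<Rightarrow> real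
    \<Rightarrow> (real \<times> real \<Rightarrow> real) \<Rightarrow> (real \<times> real \<Rightarrow> real) \<Rightarrow> (real \<times> real \<Rightarrow> real) \<Rightarrow> bool" where
  "is_product_mode_on_square \<alpha> s p k u P1 P2 \<longleftrightarrow> (\<forall>x y. p \<le> x \<and> x \<le> p + s \<longrightarrow>
      u (x, y) = k * (robin_mode \<alpha> s (x - p) * robin_mode \<alpha> s y) \<and>
      P1 (x, y) = k * (robin_mode_deriv \<alpha> s (x - p) * robin_mode \<alpha> s y) \<and>
      P2 (x, y) = k * (robin_mode \<alpha> s (x - p) * robin_mode_deriv \<alpha> s y))"

lemma product_mode_square_integrals:
  assumes "has_partials u P1 P2" "is_product_mode_on_square \<alpha> s p k u P1 P2"
  defines "A \<equiv> integral {0..s} (\<lambda>t. (robin_mode_deriv \<alpha> s t)\<^sup>2)"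
    and "B \<equiv> integral {0..s} (\<lambda>t. (robin_mode \<alpha> s t)\<^sup>2)"
  shows "mass_sq p s u = k\<^sup>2 * B\<^sup>2" "integral (cbox (p,0) (p+s,s)) (grad_sq u) = k\<^sup>2 * (2 * A * B)"
proof -
  define \<phi> \<phi>' where "\<phi> = robin_mode \<alpha> s" and "\<phi>' = robin_mode_deriv \<alpha> s"
  define Q where "Q = cbox (p,0) (p+s,s)"
  have on_square: "p \<le> fst z \<and> fst z \<le> p + s" if "z \<in> Q" for z
    using that unfolding Q_def cbox_Pair_eq by auto
  note mode = assms(2)[unfolded is_product_mode_on_square_def, folded \<phi>_def \<phi>'_def, rule_format,
      OF conjI, THEN conjunct1] assms(2)[unfolded is_product_mode_on_square_def, folded \<phi>_def \<phi>'_def,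
      rule_format, OF conjI, THEN conjunct2]
  note tensor = integral_square_tensor[of _ _ p s, folded Q_def]
  have c: "continuous_on UNIV \<phi>" "continuous_on UNIV \<phi>'"
    unfolding \<phi>_def \<phi>'_def by (rule continuous_on_robin_mode continuous_on_robin_mode_deriv)+
  have "mass_sq p s u = integral Q (\<lambda>z. k\<^sup>2 * (\<phi> (fst z - p) * \<phi> (snd z))\<^sup>2)"
    unfolding mass_sq_def Q_def[symmetric] using mode on_square
    by (intro integral_cong) (auto simp: power_mult_distrib)
  also have "\<dots> = k\<^sup>2 * B\<^sup>2"
    using tensor(2)[OF c(1) c(1)] unfolding B_def \<phi>_def by (simp add: power2_eq_square)
  finally show "mass_sq p s u = k\<^sup>2 * B\<^sup>2" .
  have "integral Q (grad_sq u) = integral Q (\<lambda>z. k\<^sup>2 * (\<phi>' (fst z - p) * \<phi> (snd z))\<^sup>2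
      + k\<^sup>2 * (\<phi> (fst z - p) * \<phi>' (snd z))\<^sup>2)"
    unfolding grad_sq_eq_partials[OF assms(1)] using mode on_square
    by (intro integral_cong) (auto simp: power_mult_distrib)
  also have "\<dots> = integral Q (\<lambda>z. k\<^sup>2 * (\<phi>' (fst z - p) * \<phi> (snd z))\<^sup>2)
      + integral Q (\<lambda>z. k\<^sup>2 * (\<phi> (fst z - p) * \<phi>' (snd z))\<^sup>2)"
    using integrable_cmul[OF tensor(1)[OF c(2) c(1)], of "k\<^sup>2"]
      integrable_cmul[OF tensor(1)[OF c(1) c(2)], of "k\<^sup>2"]
    by (intro integral_add) simp_all
  also have "\<dots> = k\<^sup>2 * (2 * A * B)"
    using tensor(2)[OF c(2) c(1)] tensor(2)[OF c(1) c(2)] unfolding A_def B_def \<phi>_def \<phi>'_def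
    by (simp add: algebra_simps)
  finally show "integral (cbox (p,0) (p+s,s)) (grad_sq u) = k\<^sup>2 * (2 * A * B)" unfolding Q_def .
qed

text \<open>The Robin-Poincare inequality is an equality for the mode in each variable.\<close>

lemma robin_form_sq_product_mode:
  assumes "\<alpha> > 0" "s > 0" "has_partials u P1 P2" "is_product_mode_on_square \<alpha> s p k u P1 P2"
  shows "robin_form_sq \<alpha> p s u
       = 2 * robin_first_eig \<alpha> s * mass_sq p s u"
proof -
  define \<phi> where "\<phi> = robin_mode \<alpha> s"
  define A B where "A = integral {0..s} (\<lambda>t. (robin_mode_deriv \<alpha> s t)\<^sup>2)"
    and "B = integral {0..s} (\<lambda>t. (\<phi> t)\<^sup>2)"
  note mode = assms(4)[unfolded is_product_mode_on_square_def, folded \<phi>_def, rule_format,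
      OF conjI, THEN conjunct1]
  have horizontal_edge: "integral {0..s} (\<lambda>t. (u (p + t, y))\<^sup>2) = k\<^sup>2 * (\<phi> y)\<^sup>2 * B" for y
  proof -
    have "integral {0..s} (\<lambda>t. (u (p + t, y))\<^sup>2) = integral {0..s} (\<lambda>t. k\<^sup>2 * (\<phi> y)\<^sup>2 * (\<phi> t)\<^sup>2)"
      using mode by (intro integral_cong) (auto simp: power_mult_distrib)
    then show ?thesis unfolding B_def by simp
  qed
  have vertical_edge: "integral {0..s} (\<lambda>t. (u (p + x, t))\<^sup>2) = k\<^sup>2 * (\<phi> x)\<^sup>2 * B"
    if "0 \<le> x" "x \<le> s" for x
  proof -
    have "integral {0..s} (\<lambda>t. (u (p + x, t))\<^sup>2) = integral {0..s} (\<lambda>t. k\<^sup>2 * (\<phi> x)\<^sup>2 * (\<phi> t)\<^sup>2)"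
      using mode that by (intro integral_cong) (auto simp: power_mult_distrib)
    then show ?thesis unfolding B_def by simp
  qed
  have "A + \<alpha> * ((\<phi> 0)\<^sup>2 + (\<phi> s)\<^sup>2) = robin_first_eig \<alpha> s * B"
    using robin_mode_energy[OF assms(1,2)] unfolding A_def B_def \<phi>_def .
  moreover have "robin_form_sq \<alpha> p s u = k\<^sup>2 * 2 * B * (A + \<alpha> * ((\<phi> 0)\<^sup>2 + (\<phi> s)\<^sup>2))"
    unfolding robin_form_sq_def product_mode_square_integrals(2)[OF assms(3,4)]
    using horizontal_edge[of 0] horizontal_edge[of s] vertical_edge[of 0] vertical_edge[of s] assms(2)
    unfolding A_def B_def \<phi>_def by (simp add: algebra_simps)
  ultimately show ?thesis
    unfolding product_mode_square_integrals(1)[OF assms(3,4)] B_def \<phi>_def by (simp add: power2_eq_square)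
qed

lemma square_modes_rayleigh:
  assumes "\<alpha> > 0" "s > 0" "l < m"
  shows "mass_sq (2 * real l * s) s (lincomb (square_mode \<alpha> s) c m)
       = (c l)\<^sup>2 * (integral {0..s} (\<lambda>t. (robin_mode \<alpha> s t)\<^sup>2))\<^sup>2"
    "robin_form_sq \<alpha> (2 * real l * s) s (lincomb (square_mode \<alpha> s) c m)
       = 2 * robin_first_eig \<alpha> s * mass_sq (2 * real l * s) s (lincomb (square_mode \<alpha> s) c m)"
proof -
  have "is_product_mode_on_square \<alpha> s (2 * real l * s) (c l) (lincomb (square_mode \<alpha> s) c m)
      (\<lambda>z. \<Sum>i<m. c i * square_mode_dx \<alpha> s i z) (\<lambda>z. \<Sum>i<m. c i * square_mode_dy \<alpha> s i z)"
    unfolding is_product_mode_on_square_def using square_mode_lincomb_on_square[OF assms(2,3) refl] by simp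
  with has_partials_lincomb[OF square_mode_has_partials[OF assms(2)]]
  show "mass_sq (2 * real l * s) s (lincomb (square_mode \<alpha> s) c m)
       = (c l)\<^sup>2 * (integral {0..s} (\<lambda>t. (robin_mode \<alpha> s t)\<^sup>2))\<^sup>2"
    "robin_form_sq \<alpha> (2 * real l * s) s (lincomb (square_mode \<alpha> s) c m)
       = 2 * robin_first_eig \<alpha> s * mass_sq (2 * real l * s) s (lincomb (square_mode \<alpha> s) c m)"
    by (rule product_mode_square_integrals(1), rule robin_form_sq_product_mode[OF assms(1,2)])
qed

lemma robin_form_sq_quadratic_on:
  assumes "\<And>i. i < m \<Longrightarrow> has_partials (f i) (P1 i) (P2 i)"
  shows "quadratic_on (robin_form_sq \<alpha> p s) m f" "quadratic_on (mass_sq p s) m f"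
proof -
  have cont: "continuous_on UNIV (f i)" "continuous_on UNIV (P1 i)" "continuous_on UNIV (P2 i)" if "i < m" for i
    using has_partials_continuous_on has_partialsD(2,3) assms[OF that] by blast+
  have products: "(\<lambda>x. g i x * g j x) integrable_on cbox a b"
    if "\<And>i. i < m \<Longrightarrow> continuous_on UNIV (g i)" "i < m" "j < m"
    for g :: "nat \<Rightarrow> 'a::euclidean_space \<Rightarrow> real" and i j a b
  proof -
    have "continuous_on UNIV (\<lambda>x. g i x * g j x)" using that by (intro continuous_on_mult) auto
    then show ?thesis by (rule integrable_continuous[OF continuous_on_subset[OF _ subset_UNIV]])
  qed
  have edge: "quadratic_on (\<lambda>u. integral {0..s} (\<lambda>t. (u (\<gamma> t))\<^sup>2)) m f"
    if "continuous_on UNIV \<gamma>" for \<gamma> :: "real \<Rightarrow> real \<times> real"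
  proof (rule quadratic_on_integral[where h = "\<lambda>i j t. f i (\<gamma> t) * f j (\<gamma> t)"])
    have "continuous_on UNIV (\<lambda>t. f i (\<gamma> t))" if "i < m" for i
      using continuous_on_compose2[OF cont(1)[OF that] \<open>continuous_on UNIV \<gamma>\<close>] by simp
    then show "(\<lambda>t. f i (\<gamma> t) * f j (\<gamma> t)) integrable_on {0..s}" if "i < m" "j < m" for i j
      using products[of "\<lambda>i t. f i (\<gamma> t)" i j 0 s] that by (simp add: cbox_interval)
  qed (simp add: lincomb_def square_sum_eq_quad_form)
  have "grad_sq (lincomb f c m) z = quad_form (\<lambda>i j. P1 i z * P1 j z + P2 i z * P2 j z) m c" for c z
    using grad_sq_eq_partials[OF has_partials_lincomb[where c = c, OF assms], where z = z]
    by (simp add: quad_form_add square_sum_eq_quad_form)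
  moreover have "(\<lambda>z. P1 i z * P1 j z + P2 i z * P2 j z) integrable_on cbox (p,0) (p+s,s)"
    if "i < m" "j < m" for i j
    using products[of P1 i j "(p,0)" "(p+s,s)"] products[of P2 i j "(p,0)" "(p+s,s)"] cont that
    by (intro integrable_add) auto
  ultimately have "quadratic_on (\<lambda>u. integral (cbox (p,0) (p+s,s)) (grad_sq u)) m f"
    by (intro quadratic_on_integral) auto
  moreover have "continuous_on UNIV (\<lambda>t::real. (p + t, y))" "continuous_on UNIV (\<lambda>t::real. (x, t))" for x y
    by (auto intro!: continuous_intros)
  ultimately show "quadratic_on (robin_form_sq \<alpha> p s) m f"
    unfolding robin_form_sq_def[abs_def] by (intro quadratic_on_add quadratic_on_cmult edge)
  show "quadratic_on (mass_sq p s) m f"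
    unfolding mass_sq_def[abs_def] using products[of f] cont(1)
    by (intro quadratic_on_integral[where h = "\<lambda>i j z. f i z * f j z"])
       (auto simp: lincomb_def square_sum_eq_quad_form)
qed

lemma robin_eig_squares_eq:
  assumes "\<alpha> > 0" "s > 0" "m \<ge> 1"
  shows "robin_eig_squares \<alpha> m s m = 2 * robin_first_eig \<alpha> s"
proof -
  define Q where "Q u = (\<Sum>l<m. robin_form_sq \<alpha> (2 * real l * s) s u)" for u
  define M where "M u = (\<Sum>l<m. mass_sq (2 * real l * s) s u)" for u
  define B where "B = integral {0..s} (\<lambda>t. (robin_mode \<alpha> s t)\<^sup>2)"
  have partials: "has_partials (f i) (\<lambda>z. frechet_derivative (f i) (at z) (1,0))
      (\<lambda>z. frechet_derivative (f i) (at z) (0,1))" if "minmax_admissible C1_plane M m f" "i < m" for f i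
    using that C1_plane_has_partials unfolding minmax_admissible_def by blast
  have quadratic: "quadratic_on Q m f \<and> quadratic_on M m f" if "minmax_admissible C1_plane M m f" for f
    unfolding Q_def[abs_def] M_def[abs_def]
    using robin_form_sq_quadratic_on[OF partials[OF that]] by (auto intro!: quadratic_on_sum)
  have lower: "\<exists>c. (\<exists>i<m. c i \<noteq> 0) \<and> 2 * robin_first_eig \<alpha> s * M (lincomb f c m) \<le> Q (lincomb f c m)"
    if "minmax_admissible C1_plane M m f" for f
  proof -
    have "2 * robin_first_eig \<alpha> s * M (lincomb f c m) \<le> Q (lincomb f c m)" for c
      unfolding M_def Q_def sum_distrib_left
      by (intro sum_mono robin_form_sq_ge[OF assms(1,2) has_partials_lincomb[OF partials[OF that]]])
    then show ?thesis using assms(3) by (intro exI[of _ "\<lambda>_. 1"]) (auto intro!: exI[of _ 0])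
  qed
  note per_square = square_modes_rayleigh[OF assms(1,2), folded B_def]
  have tests: "M (lincomb (square_mode \<alpha> s) c m) = (\<Sum>l<m. (c l)\<^sup>2) * B\<^sup>2"
    "Q (lincomb (square_mode \<alpha> s) c m) = 2 * robin_first_eig \<alpha> s * M (lincomb (square_mode \<alpha> s) c m)" for c
    unfolding M_def Q_def sum_distrib_left sum_distrib_right by (auto intro!: sum.cong simp: per_square)
  have admissible: "minmax_admissible C1_plane M m (square_mode \<alpha> s)"
    unfolding minmax_admissible_def
  proof (intro conjI allI impI)
    show "C1_plane (square_mode \<alpha> s i)" if "i < m" for i
      by (rule has_partials_C1_plane[OF square_mode_has_partials[OF assms(2)]])
    fix c :: "nat \<Rightarrow> real" assume "\<exists>i<m. c i \<noteq> 0"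
    then obtain i where "i < m" "c i \<noteq> 0" by blast
    then have "(\<Sum>l<m. (c l)\<^sup>2) > 0" by (intro sum_pos2[of "{..<m}" i]) auto
    moreover have "B > 0" unfolding B_def by (rule robin_mode_mass_pos[OF assms(2)])
    ultimately show "M (lincomb (square_mode \<alpha> s) c m) > 0" unfolding tests by simp
  qed
  have "2 * robin_first_eig \<alpha> s \<le> minmax_level C1_plane Q M m"
    using admissible quadratic lower by (intro minmax_level_ge) blast+
  moreover have "minmax_level C1_plane Q M m \<le> 2 * robin_first_eig \<alpha> s"
    by (rule minmax_level_le[OF quadratic lower admissible assms(3)]) (simp_all add: tests(2))
  ultimately show ?thesis unfolding robin_eig_squares_def Q_def[abs_def] M_def[abs_def] by simp
qed

theorem lemma7p1:
  fixes \<alpha> A a :: real and k :: nat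
  assumes "\<alpha> > 0" and "A > 0" and "k \<ge> 2" and "a \<ge> 1"
  shows "robin_eig_interval \<alpha> (sqrt A * a) k + robin_eig_interval \<alpha> (sqrt A / a) 1
           \<ge> robin_eig_squares \<alpha> 1 (sqrt (A / real k)) 1
       \<and> robin_eig_squares \<alpha> 1 (sqrt (A / real k)) 1
           = robin_eig_squares \<alpha> k (sqrt (A / real k)) k"
proof -
  define s where "s = sqrt (A / real k)"
  define x y where "x = sqrt A * a / real k" and "y = sqrt A / a"
  have "s > 0" "x > 0" "y > 0" using assms unfolding s_def x_def y_def by auto
  have "sqrt (x * y) = s"
    using assms unfolding s_def x_def y_def by (simp add: real_sqrt_mult real_sqrt_divide)
  then have "2 * robin_first_eig \<alpha> s \<le> robin_first_eig \<alpha> x + robin_first_eig \<alpha> y"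
    using robin_first_eig_midpoint_log_convex[OF assms(1) \<open>x > 0\<close> \<open>y > 0\<close>] by simp
  also have "\<dots> \<le> robin_eig_interval \<alpha> (sqrt A * a) k + robin_eig_interval \<alpha> (sqrt A / a) 1"
    using robin_eig_interval_ge[OF assms(1), of "sqrt A * a" k] robin_eig_interval_ge[OF assms(1), of "sqrt A / a" 1]
      assms unfolding x_def y_def by simp
  finally show ?thesis
    using robin_eig_squares_eq[OF assms(1) \<open>s > 0\<close>, of 1] robin_eig_squares_eq[OF assms(1) \<open>s > 0\<close>, of k] assms(3)
    unfolding s_def by simp
qed

end
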